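(* Let $\mathcal{G}$ be an ordered groupoid and let $\alpha=(A_g,\alpha_g)_{g\in\mathcal{G}}$ be a preunital partial ordered (P.O.) action of $\mathcal{G}$ on a ring $A$. Then $\alpha$ has a globalization $\beta$ if and only if $\alpha$ is unital.
   Context: A groupoid $\mathcal{G}$ is a small category in which every morphism is invertible; $\mathcal{G}_0\subseteq\mathcal{G}$ denotes the set of identities (objects), $d(g)=g^{-1}g$, $r(g)=gg^{-1}$, and $\mathcal{G}_2=\{(g,h): gh \text{ is defined}\}$. $\mathcal{G}$ is ordered if it carries a partial order $\le$ such that: (OG1) $g\le h\Rightarrow g^{-1}\le h^{-1}$; (OG2) if $g\le h$, $k\le \ell$, and $gk$, $h\ell$ are defined, then $gk\le h\ell$; (OG3) for $g\in\mathcal{G}$, $e\in\mathcal{G}_0$ with $e\le d(g)$ there is a unique $(g|e)\le g$ with $d(g|e)=e$; (OG3* ) for $e\le r(g)$ there is a unique $(e|g)\le g$ with $r(e|g)=e$. A partial action $\alpha=(A_g,\alpha_g)_{g\in\mathcal{G}}$ of $\mathcal{G}$ on a ring $A$ consists of ideals $A_{r(g)}$ of $A$, ideals $A_g$ of $A_{r(g)}$ and ring isomorphisms $\alpha_g:A_{g^{-1}}\to A_g$ such that: (P1) $\alpha_e=\mathrm{Id}_{A_e}$ for $e\in\mathcal{G}_0$ and $A=\sum_{e\in\mathcal{G}_0}A_e$; (P2) $\alpha_h^{-1}(A_{g^{-1}}\cap A_h)\subseteq A_{(gh)^{-1}}$ for $(g,h)\in\mathcal{G}_2$; (P3) $\alpha_g\alpha_h(a)=\alpha_{gh}(a)$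 for $(g,h)\in\mathcal{G}_2$, $a\in\alpha_h^{-1}(A_{g^{-1}}\cap A_h)$. It is a P.O. action if moreover (PO): $g\le h$ implies $A_g\subseteq A_h$ and $\alpha_g=\alpha_h|_{A_{g^{-1}}}$. It is unital if every $A_g$ is generated by (i.e. equals $A1_g$ for) a central idempotent $1_g$ of $A$; it is preunital if every $A_e$, $e\in\mathcal{G}_0$, is a unital ring whose identity $1_e$ is a central idempotent of $A$. A global action is a partial action with $A_g=A_{r(g)}$ for all $g$; an ordered global action is a global action satisfying (PO). A globalization of a P.O. action $\alpha$ on $A$ is an ordered global action $\beta=(B_g,\beta_g)_{g\in\mathcal{G}}$ of $\mathcal{G}$ on a ring $B$ together with injective ring homomorphisms $\varphi_e:A_e\to B_e$ ($e\in\mathcal{G}_0$) such that: (i) $\varphi_e(A_e)$ is an ideal of $B_e$; (ii) $\varphi_{r(g)}(A_g)=\varphi_{r(g)}(A_{r(g)})\cap\beta_g(\varphi_{d(g)}(A_{d(g)}))$ for all $g$; (iii) $\beta_g\circ\varphi_{d(g)}(a)=\varphi_{r(g)}\circ\alpha_g(a)$ for all $g$, $a\in A_{g^{-1}}$; (iv) $B_g=\sum_{r(h)\le r(g)}\beta_h(\varphi_{d(h)}(A_{d(h)}))$ for all $g$. *)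

theory Defs
  imports Main "HOL-Library.Function_Algebras"
begin

text \<open>A groupoid is given by a carrier G, a (total HOL function representing the)
  partial composition m, and inversion iv.  The composite m g h is only meaningful
  when gd g = gr h.\<close>

definition gd :: "('g \<Rightarrow> 'g \<Rightarrow> 'g) \<Rightarrow> ('g \<Rightarrow> 'g) \<Rightarrow> 'g \<Rightarrow> 'g" where
  "gd m iv g = m (iv g) g"

definition gr :: "('g \<Rightarrow> 'g \<Rightarrow> 'g) \<Rightarrow> ('g \<Rightarrow> 'g) \<Rightarrow> 'g \<Rightarrow> 'g" where
  "gr m iv g = m g (iv g)"

definition objects :: "'g set \<Rightarrow> ('g \<Rightarrow> 'g \<Rightarrow> 'g) \<Rightarrow> ('g \<Rightarrow> 'g) \<Rightarrow> 'g set" where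
  "objects G m iv = gd m iv ` G"

definition groupoid :: "'g set \<Rightarrow> ('g \<Rightarrow> 'g \<Rightarrow> 'g) \<Rightarrow> ('g \<Rightarrow> 'g) \<Rightarrow> bool" where
  "groupoid G m iv \<longleftrightarrow>
     (\<forall>g\<in>G. iv g \<in> G \<and> iv (iv g) = g) \<and>
     (\<forall>g\<in>G. \<forall>h\<in>G. gd m iv g = gr m iv h \<longrightarrow>
        m g h \<in> G \<and> gd m iv (m g h) = gd m iv h \<and> gr m iv (m g h) = gr m iv g) \<and>
     (\<forall>g\<in>G. \<forall>h\<in>G. \<forall>k\<in>G. gd m iv g = gr m iv h \<longrightarrow> gd m iv h = gr m iv k \<longrightarrow>
        m (m g h) k = m g (m h k)) \<and>
     (\<forall>g\<in>G. m (gr m iv g) g = g \<and> m g (gd m iv g) = g)"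

definition ordered_groupoid ::
  "'g set \<Rightarrow> ('g \<Rightarrow> 'g \<Rightarrow> 'g) \<Rightarrow> ('g \<Rightarrow> 'g) \<Rightarrow> ('g \<Rightarrow> 'g \<Rightarrow> bool) \<Rightarrow> bool" where
  "ordered_groupoid G m iv le \<longleftrightarrow>
     groupoid G m iv \<and>
     \<comment> \<open>le is a partial order on G\<close>
     (\<forall>g\<in>G. le g g) \<and>
     (\<forall>g\<in>G. \<forall>h\<in>G. le g h \<longrightarrow> le h g \<longrightarrow> g = h) \<and>
     (\<forall>g\<in>G. \<forall>h\<in>G. \<forall>k\<in>G. le g h \<longrightarrow> le h k \<longrightarrow> le g k) \<and>
     \<comment> \<open>OG1\<close>
     (\<forall>g\<in>G. \<forall>h\<in>G. le g h \<longrightarrow> le (iv g) (iv h)) \<and>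
     \<comment> \<open>OG2\<close>
     (\<forall>g\<in>G. \<forall>h\<in>G. \<forall>k\<in>G. \<forall>l\<in>G. le g h \<longrightarrow> le k l \<longrightarrow>
        gd m iv g = gr m iv k \<longrightarrow> gd m iv h = gr m iv l \<longrightarrow> le (m g k) (m h l)) \<and>
     \<comment> \<open>OG3\<close>
     (\<forall>g\<in>G. \<forall>e\<in>objects G m iv. le e (gd m iv g) \<longrightarrow>
        (\<exists>!x. x \<in> G \<and> le x g \<and> gd m iv x = e)) \<and>
     \<comment> \<open>OG3*\<close>
     (\<forall>g\<in>G. \<forall>e\<in>objects G m iv. le e (gr m iv g) \<longrightarrow>
        (\<exists>!x. x \<in> G \<and> le x g \<and> gr m iv x = e))"

definition is_subring :: "'a::ring set \<Rightarrow> bool" where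
  "is_subring R \<longleftrightarrow> 0 \<in> R \<and> (\<forall>x\<in>R. \<forall>y\<in>R. x + y \<in> R \<and> x * y \<in> R) \<and> (\<forall>x\<in>R. - x \<in> R)"

definition is_ideal :: "'a::ring set \<Rightarrow> 'a set \<Rightarrow> bool" where
  "is_ideal I R \<longleftrightarrow> I \<subseteq> R \<and> 0 \<in> I \<and> (\<forall>x\<in>I. \<forall>y\<in>I. x + y \<in> I) \<and> (\<forall>x\<in>I. - x \<in> I) \<and>
     (\<forall>r\<in>R. \<forall>x\<in>I. r * x \<in> I \<and> x * r \<in> I)"

definition set_sum :: "'i set \<Rightarrow> ('i \<Rightarrow> 'a::ab_group_add set) \<Rightarrow> 'a set" where
  "set_sum I F = {sum f S | S f. finite S \<and> S \<subseteq> I \<and> (\<forall>i\<in>S. f i \<in> F i)}"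

definition ring_hom_on :: "('a::ring \<Rightarrow> 'b::ring) \<Rightarrow> 'a set \<Rightarrow> bool" where
  "ring_hom_on f X \<longleftrightarrow> (\<forall>x\<in>X. \<forall>y\<in>X. f (x + y) = f x + f y \<and> f (x * y) = f x * f y)"

definition ring_iso :: "('a::ring \<Rightarrow> 'b::ring) \<Rightarrow> 'a set \<Rightarrow> 'b set \<Rightarrow> bool" where
  "ring_iso f X Y \<longleftrightarrow> bij_betw f X Y \<and> ring_hom_on f X"

definition partial_action ::
  "'g set \<Rightarrow> ('g \<Rightarrow> 'g \<Rightarrow> 'g) \<Rightarrow> ('g \<Rightarrow> 'g) \<Rightarrow> 'a::ring set \<Rightarrow> ('g \<Rightarrow> 'a set) \<Rightarrow> ('g \<Rightarrow> 'a \<Rightarrow> 'a) \<Rightarrow> bool"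
  where
  "partial_action G m iv R D al \<longleftrightarrow>
     is_subring R \<and>
     (\<forall>e\<in>objects G m iv. is_ideal (D e) R) \<and>
     (\<forall>g\<in>G. is_ideal (D g) (D (gr m iv g))) \<and>
     (\<forall>g\<in>G. ring_iso (al g) (D (iv g)) (D g)) \<and>
     \<comment> \<open>P1\<close>
     (\<forall>e\<in>objects G m iv. \<forall>a\<in>D e. al e a = a) \<and>
     R = set_sum (objects G m iv) D \<and>
     \<comment> \<open>P2\<close>
     (\<forall>g\<in>G. \<forall>h\<in>G. gd m iv g = gr m iv h \<longrightarrow>
        {a \<in> D (iv h). al h a \<in> D (iv g) \<inter> D h} \<subseteq> D (iv (m g h))) \<and>
     \<comment> \<open>P3\<close>
     (\<forall>g\<in>G. \<forall>h\<in>G. gd m iv g = gr m iv h \<longrightarrow>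
        (\<forall>a\<in>{a \<in> D (iv h). al h a \<in> D (iv g) \<inter> D h}. al g (al h a) = al (m g h) a))"

definition po_cond ::
  "'g set \<Rightarrow> ('g \<Rightarrow> 'g) \<Rightarrow> ('g \<Rightarrow> 'g \<Rightarrow> bool) \<Rightarrow> ('g \<Rightarrow> 'a set) \<Rightarrow> ('g \<Rightarrow> 'a \<Rightarrow> 'a) \<Rightarrow> bool"
  where
  "po_cond G iv le D al \<longleftrightarrow>
     (\<forall>g\<in>G. \<forall>h\<in>G. le g h \<longrightarrow> D g \<subseteq> D h \<and> (\<forall>a\<in>D (iv g). al g a = al h a))"

definition po_action ::
  "'g set \<Rightarrow> ('g \<Rightarrow> 'g \<Rightarrow> 'g) \<Rightarrow> ('g \<Rightarrow> 'g) \<Rightarrow> ('g \<Rightarrow> 'g \<Rightarrow> bool) \<Rightarrow>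
   'a::ring set \<Rightarrow> ('g \<Rightarrow> 'a set) \<Rightarrow> ('g \<Rightarrow> 'a \<Rightarrow> 'a) \<Rightarrow> bool" where
  "po_action G m iv le R D al \<longleftrightarrow> partial_action G m iv R D al \<and> po_cond G iv le D al"

definition unital ::
  "'g set \<Rightarrow> 'a::ring set \<Rightarrow> ('g \<Rightarrow> 'a set) \<Rightarrow> bool" where
  "unital G R D \<longleftrightarrow>
     (\<forall>g\<in>G. \<exists>u\<in>R. u * u = u \<and> (\<forall>x\<in>R. x * u = u * x) \<and> D g = (\<lambda>x. x * u) ` R)"

definition preunital ::
  "'g set \<Rightarrow> ('g \<Rightarrow> 'g \<Rightarrow> 'g) \<Rightarrow> ('g \<Rightarrow> 'g) \<Rightarrow> 'a::ring set \<Rightarrow> ('g \<Rightarrow> 'a set) \<Rightarrow> bool" where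
  "preunital G m iv R D \<longleftrightarrow>
     (\<forall>e\<in>objects G m iv. \<exists>u\<in>D e. (\<forall>x\<in>D e. u * x = x \<and> x * u = x) \<and>
        u * u = u \<and> (\<forall>x\<in>R. x * u = u * x))"

definition ordered_global_action ::
  "'g set \<Rightarrow> ('g \<Rightarrow> 'g \<Rightarrow> 'g) \<Rightarrow> ('g \<Rightarrow> 'g) \<Rightarrow> ('g \<Rightarrow> 'g \<Rightarrow> bool) \<Rightarrow>
   'b::ring set \<Rightarrow> ('g \<Rightarrow> 'b set) \<Rightarrow> ('g \<Rightarrow> 'b \<Rightarrow> 'b) \<Rightarrow> bool" where
  "ordered_global_action G m iv le S E be \<longleftrightarrow>
     po_action G m iv le S E be \<and> (\<forall>g\<in>G. E g = E (gr m iv g))"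

definition globalization ::
  "'g set \<Rightarrow> ('g \<Rightarrow> 'g \<Rightarrow> 'g) \<Rightarrow> ('g \<Rightarrow> 'g) \<Rightarrow> ('g \<Rightarrow> 'g \<Rightarrow> bool) \<Rightarrow>
   ('g \<Rightarrow> 'a::ring set) \<Rightarrow> ('g \<Rightarrow> 'a \<Rightarrow> 'a) \<Rightarrow>
   'b::ring set \<Rightarrow> ('g \<Rightarrow> 'b set) \<Rightarrow> ('g \<Rightarrow> 'b \<Rightarrow> 'b) \<Rightarrow> ('g \<Rightarrow> 'a \<Rightarrow> 'b) \<Rightarrow> bool" where
  "globalization G m iv le D al S E be ph \<longleftrightarrow>
     ordered_global_action G m iv le S E be \<and>
     (\<forall>e\<in>objects G m iv. inj_on (ph e) (D e) \<and> ring_hom_on (ph e) (D e) \<and>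
        ph e ` D e \<subseteq> E e) \<and>
     \<comment> \<open>(i)\<close>
     (\<forall>e\<in>objects G m iv. is_ideal (ph e ` D e) (E e)) \<and>
     \<comment> \<open>(ii)\<close>
     (\<forall>g\<in>G. ph (gr m iv g) ` D g =
        ph (gr m iv g) ` D (gr m iv g) \<inter> be g ` (ph (gd m iv g) ` D (gd m iv g))) \<and>
     \<comment> \<open>(iii)\<close>
     (\<forall>g\<in>G. \<forall>a\<in>D (iv g). be g (ph (gd m iv g) a) = ph (gr m iv g) (al g a)) \<and>
     \<comment> \<open>(iv)\<close>
     (\<forall>g\<in>G. E g = set_sum {h\<in>G. le (gr m iv h) (gr m iv g)}
                          (\<lambda>h. be h ` (ph (gd m iv h) ` D (gd m iv h))))"

end

(*
  If alpha has a globalization (beta, phi), fix g and put e = r(g), f = d(g).  By (ii), phi_e(A_g)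
  is the intersection of the ideals phi_e(A_e) and beta_g(phi_f(A_f)) of B_e.  Since A_e and A_f have
  identities, so do these two ideals, and the product of their identities is an identity of the
  intersection.  Pulled back along the injective phi_e it is an identity of A_g, and an ideal of A
  with an identity is generated by a central idempotent.

  Conversely, for unital alpha take B to be the ring of functions G -> A, let phi_e(a) be
  x |-> alpha_(x^-1)(a 1_x) on the arrows x with r(x) = e, and let beta_g move a function along the
  restrictions (r(x)|g) of g.  Condition (iv) then forces B_g to be the sum of the
  beta_h(phi_(d h)(A_(d h))) with r(h) <= r(g).  The heart of the proof is that these sums are ideals:
  a product of generators at h and h' with r(h) = r(h') is again a generator at h', which comes down
  to alpha_g(a 1_l) = alpha_g(a) 1_(gl) for a in A_(g^-1).
*)

theory Submission
  imports Defs
begin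

section \<open>Sums of families of subsets\<close>

lemma set_sum_memI: "i \<in> I \<Longrightarrow> y \<in> F i \<Longrightarrow> y \<in> set_sum I F"
  unfolding set_sum_def by (rule CollectI, rule exI[of _ "{i}"], rule exI[of _ "\<lambda>_. y"]) auto

lemma zero_in_set_sum: "0 \<in> set_sum I F"
  unfolding set_sum_def by (rule CollectI, rule exI[of _ "{}"]) auto

lemma set_sum_mono: "I \<subseteq> J \<Longrightarrow> set_sum I F \<subseteq> set_sum J F"
  unfolding set_sum_def by blast

lemma set_sum_cong:
  assumes "\<And>i. i \<in> I \<Longrightarrow> F i = F' i"
  shows "set_sum I F = set_sum I F'"
  unfolding set_sum_def
proof (rule Collect_cong)
  fix x
  show "(\<exists>S f. x = sum f S \<and> finite S \<and> S \<subseteq> I \<and> (\<forall>i\<in>S. f i \<in> F i)) \<longleftrightarrow>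
      (\<exists>S f. x = sum f S \<and> finite S \<and> S \<subseteq> I \<and> (\<forall>i\<in>S. f i \<in> F' i))"
    using assms by (metis subsetD)
qed

lemma set_sum_induct:
  assumes "x \<in> set_sum I F" and "P 0" and "\<And>a b. P a \<Longrightarrow> P b \<Longrightarrow> P (a + b)"
    and "\<And>i y. i \<in> I \<Longrightarrow> y \<in> F i \<Longrightarrow> P y"
  shows "P x"
proof -
  obtain S f where x: "x = sum f S" "finite S" "S \<subseteq> I" "\<forall>i\<in>S. f i \<in> F i"
    using assms(1) unfolding set_sum_def by blast
  have "S \<subseteq> I \<longrightarrow> (\<forall>i\<in>S. f i \<in> F i) \<longrightarrow> P (sum f S)"
    using x(2) by (induction S rule: finite_induct) (auto intro: assms(2-4))
  with x show ?thesis by auto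
qed

lemma add_in_set_sum:
  assumes add_closed: "\<And>i x y. i \<in> I \<Longrightarrow> x \<in> F i \<Longrightarrow> y \<in> F i \<Longrightarrow> x + y \<in> F i"
    and a: "a \<in> set_sum I F" and b: "b \<in> set_sum I F"
  shows "a + b \<in> set_sum I F"
proof -
  obtain S f where S: "a = sum f S" "finite S" "S \<subseteq> I" "\<forall>i\<in>S. f i \<in> F i"
    using a unfolding set_sum_def by blast
  obtain T g where T: "b = sum g T" "finite T" "T \<subseteq> I" "\<forall>i\<in>T. g i \<in> F i"
    using b unfolding set_sum_def by blast
  define f' where "f' i = (if i \<in> S then f i else 0)" for i
  define g' where "g' i = (if i \<in> T then g i else 0)" for i
  have "a = sum f' (S \<union> T)" "b = sum g' (S \<union> T)"
    by (simp_all add: S(1,2) T(1,2) f'_def g'_def sum.If_cases Int_absorb1)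
  then have "a + b = (\<Sum>i\<in>S \<union> T. f' i + g' i)"
    by (simp add: sum.distrib)
  moreover have "\<forall>i\<in>S \<union> T. f' i + g' i \<in> F i"
    using S T add_closed by (auto simp: f'_def g'_def)
  ultimately show ?thesis
    unfolding set_sum_def using S T by blast
qed

lemma uminus_in_set_sum:
  assumes "\<And>i x. i \<in> I \<Longrightarrow> x \<in> F i \<Longrightarrow> - x \<in> F i" and "a \<in> set_sum I F"
  shows "- a \<in> set_sum I F"
proof -
  obtain S f where S: "a = sum f S" "finite S" "S \<subseteq> I" "\<forall>i\<in>S. f i \<in> F i"
    using assms(2) unfolding set_sum_def by blast
  have "- a = (\<Sum>i\<in>S. - f i)"
    using S(1) by (simp add: sum_negf)
  then show ?thesis
    unfolding set_sum_def using S assms(1) by blast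
qed

lemma set_sum_mult_mem:
  fixes f :: "'a::ring"
  assumes "x \<in> set_sum I F" and "0 \<in> K" and "\<And>a b. a \<in> K \<Longrightarrow> b \<in> K \<Longrightarrow> a + b \<in> K"
    and "\<And>i y. i \<in> I \<Longrightarrow> y \<in> F i \<Longrightarrow> y * f \<in> K \<and> f * y \<in> K"
  shows "x * f \<in> K \<and> f * x \<in> K"
  using assms(1)
proof (rule set_sum_induct)
  show "0 * f \<in> K \<and> f * 0 \<in> K"
    using assms(2) by simp
  show "(a + b) * f \<in> K \<and> f * (a + b) \<in> K" if "a * f \<in> K \<and> f * a \<in> K" "b * f \<in> K \<and> f * b \<in> K"
    for a b
    using that assms(3) by (simp add: distrib_left distrib_right)
qed (use assms(4) in blast)

section \<open>Identity elements of ideals\<close>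

lemma is_idealD:
  assumes "is_ideal I R"
  shows "I \<subseteq> R" and "0 \<in> I" and "x \<in> I \<Longrightarrow> y \<in> I \<Longrightarrow> x + y \<in> I" and "x \<in> I \<Longrightarrow> - x \<in> I"
    and "a \<in> R \<Longrightarrow> x \<in> I \<Longrightarrow> a * x \<in> I" and "a \<in> R \<Longrightarrow> x \<in> I \<Longrightarrow> x * a \<in> I"
  using assms unfolding is_ideal_def by blast+

definition is_identity :: "'a::ring set \<Rightarrow> 'a \<Rightarrow> bool" where
  "is_identity X u \<longleftrightarrow> u \<in> X \<and> (\<forall>x\<in>X. u * x = x \<and> x * u = x)"

lemma is_identityD:
  assumes "is_identity X u"
  shows "u \<in> X" and "x \<in> X \<Longrightarrow> u * x = x" and "x \<in> X \<Longrightarrow> x * u = x"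
  using assms unfolding is_identity_def by blast+

lemma is_identity_unique: "is_identity X u \<Longrightarrow> is_identity X v \<Longrightarrow> u = v"
  by (metis is_identityD)

lemma is_identity_principal:
  assumes idem: "u * u = u" and central: "\<And>x. x * u = u * x"
  shows "is_identity (range (\<lambda>x. x * u)) u"
  unfolding is_identity_def
proof (intro conjI ballI)
  show "u \<in> range (\<lambda>x. x * u)"
    using idem by (metis rangeI)
  fix y assume "y \<in> range (\<lambda>x. x * u)"
  then obtain x where y: "y = x * u" by blast
  show "y * u = y"
    by (simp add: y idem mult.assoc)
  have "u * (x * u) = (u * u) * x"
    using central[of x] by (simp add: mult.assoc)
  then show "u * y = y"
    using central[of x] by (simp add: y idem)
qed

lemma principal_ideal:
  fixes u :: "'a::ring"
  assumes central: "\<And>x. x * u = u * x"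
  shows "is_ideal (range (\<lambda>x. x * u)) UNIV"
  unfolding is_ideal_def
proof (intro conjI ballI)
  show "0 \<in> range (\<lambda>x. x * u)"
    by (metis mult_zero_left rangeI)
  fix a b assume "a \<in> range (\<lambda>x. x * u)" "b \<in> range (\<lambda>x. x * u)"
  then obtain x y where "a = x * u" "b = y * u" by blast
  then show "a + b \<in> range (\<lambda>x. x * u)" "- a \<in> range (\<lambda>x. x * u)"
    by (metis distrib_right rangeI, metis mult_minus_left rangeI)
next
  fix c a assume "a \<in> range (\<lambda>x. x * u)"
  then obtain x where a: "a = x * u" by blast
  have "c * a = (c * x) * u"
    by (simp add: a mult.assoc)
  moreover have "a * c = (x * c) * u"
    using central[of c] by (simp add: a mult.assoc)
  ultimately show "c * a \<in> range (\<lambda>x. x * u)" "a * c \<in> range (\<lambda>x. x * u)"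
    by simp_all
qed simp

lemma is_identity_Int_ideals:
  assumes I: "is_ideal I R" and J: "is_ideal J R" and e: "is_identity I e" and f: "is_identity J f"
  shows "is_identity (I \<inter> J) (e * f)"
  unfolding is_identity_def
proof (intro conjI ballI)
  have "e \<in> R" "f \<in> R"
    using is_idealD(1)[OF I] is_idealD(1)[OF J] is_identityD(1)[OF e] is_identityD(1)[OF f]
    by blast+
  then show "e * f \<in> I \<inter> J"
    using is_idealD(6)[OF I] is_idealD(5)[OF J] is_identityD(1)[OF e] is_identityD(1)[OF f]
    by blast
  fix x assume x: "x \<in> I \<inter> J"
  then have "e * x = x" "x * e = x" "f * x = x" "x * f = x"
    using is_identityD(2,3)[OF e] is_identityD(2,3)[OF f] by blast+
  then show "e * f * x = x" "x * (e * f) = x"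
    by (simp add: mult.assoc, simp add: mult.assoc[symmetric])
qed

lemma is_identity_image:
  assumes hom: "ring_hom_on f X" and u: "is_identity X u"
  shows "is_identity (f ` X) (f u)"
  unfolding is_identity_def
proof (intro conjI ballI)
  show "f u \<in> f ` X"
    using is_identityD(1)[OF u] by blast
  fix y assume "y \<in> f ` X"
  then obtain x where x: "x \<in> X" "y = f x" by blast
  have "f (u * x) = f u * f x" "f (x * u) = f x * f u"
    using hom is_identityD(1)[OF u] x(1) unfolding ring_hom_on_def by blast+
  then show "f u * y = y" "y * f u = y"
    using is_identityD(2,3)[OF u x(1)] x(2) by simp_all
qed

lemma is_identity_from_image:
  assumes inj: "inj_on f R" and hom: "ring_hom_on f R" and XR: "X \<subseteq> R" and v: "v \<in> X"
    and closed: "\<And>x. x \<in> X \<Longrightarrow> v * x \<in> R \<and> x * v \<in> R"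
    and image: "is_identity (f ` X) (f v)"
  shows "is_identity X v"
  unfolding is_identity_def
proof (intro conjI ballI)
  fix x assume x: "x \<in> X"
  have "f (v * x) = f v * f x" "f (x * v) = f x * f v"
    using hom XR v x unfolding ring_hom_on_def by blast+
  then have "f (v * x) = f x" "f (x * v) = f x"
    using is_identityD(2,3)[OF image] x by simp_all
  then show "v * x = x" "x * v = x"
    using inj_onD[OF inj] closed x XR by blast+
qed (rule v)

lemma ring_hom_on_subset: "ring_hom_on f Y \<Longrightarrow> X \<subseteq> Y \<Longrightarrow> ring_hom_on f X"
  unfolding ring_hom_on_def by blast

lemma ring_hom_on_zero:
  assumes "ring_hom_on f X" and "0 \<in> X"
  shows "f 0 = 0"
proof -
  have "f (0 + 0) = f 0 + f 0"
    using assms unfolding ring_hom_on_def by blast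
  then show ?thesis
    by (metis add_0 add_cancel_right_right)
qed

lemma ring_hom_on_uminus:
  assumes hom: "ring_hom_on f X" and "0 \<in> X" "x \<in> X" "- x \<in> X"
  shows "f (- x) = - f x"
proof -
  have "f (- x + x) = f (- x) + f x"
    using assms unfolding ring_hom_on_def by blast
  then have "f (- x) + f x = 0"
    using ring_hom_on_zero[OF hom \<open>0 \<in> X\<close>] by simp
  then show ?thesis
    by (simp add: eq_neg_iff_add_eq_0)
qed

lemma ideal_image_ring_iso:
  assumes iso: "ring_iso f R R'" and I: "is_ideal I R"
  shows "is_ideal (f ` I) R'"
proof -
  have hom: "ring_hom_on f R" and R': "R' = f ` R"
    using iso unfolding ring_iso_def bij_betw_def by blast+
  note ideal = is_idealD[OF I]
  have hom_I: "f (x + y) = f x + f y" "f (- x) = - f x" if "x \<in> I" "y \<in> I" for x y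
    using hom ring_hom_on_uminus[OF hom] ideal that unfolding ring_hom_on_def by blast+
  have hom_RI: "f (a * x) = f a * f x" "f (x * a) = f x * f a" if "a \<in> R" "x \<in> I" for a x
    using hom ideal(1) that unfolding ring_hom_on_def by blast+
  show ?thesis
    unfolding is_ideal_def
  proof (intro conjI ballI)
    show "f ` I \<subseteq> R'"
      using R' ideal(1) by blast
    show "0 \<in> f ` I"
      using ring_hom_on_zero[OF hom] ideal(1,2) by (metis image_eqI subsetD)
    fix x' y' assume "x' \<in> f ` I" "y' \<in> f ` I"
    then obtain x y where "x \<in> I" "y \<in> I" "x' = f x" "y' = f y" by blast
    then show "x' + y' \<in> f ` I" "- x' \<in> f ` I"
      using ideal(3,4) hom_I by (metis image_eqI)+
  next
    fix a' x' assume "a' \<in> R'" "x' \<in> f ` I"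
    then obtain a x where "a \<in> R" "x \<in> I" "a' = f a" "x' = f x"
      using R' by blast
    then show "a' * x' \<in> f ` I" "x' * a' \<in> f ` I"
      using ideal(5,6) hom_RI by (metis image_eqI)+
  qed
qed

lemma ideal_of_unital_ideal:
  fixes I J :: "'a::ring set"
  assumes I: "is_ideal I UNIV" and e: "is_identity I e" and J: "is_ideal J I"
  shows "is_ideal J UNIV"
proof -
  have "y * a \<in> J \<and> a * y \<in> J" if a: "a \<in> J" for a y
  proof -
    have "e * a = a" "a * e = a"
      using is_identityD(2,3)[OF e] is_idealD(1)[OF J] a by blast+
    then have "y * a = (y * e) * a" "a * y = a * (e * y)"
      by (simp add: mult.assoc, simp add: mult.assoc[symmetric])
    moreover have "y * e \<in> I" "e * y \<in> I"
      using is_idealD(5,6)[OF I] is_identityD(1)[OF e] by blast+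
    ultimately show ?thesis
      using is_idealD(5,6)[OF J] a by simp
  qed
  then show ?thesis
    using J unfolding is_ideal_def by blast
qed

lemma ideal_with_identity_principal:
  fixes J :: "'a::ring set"
  assumes J: "is_ideal J UNIV" and v: "is_identity J v"
  shows "v * v = v" and "x * v = v * x" and "J = range (\<lambda>x. x * v)"
proof -
  note vJ = is_identityD(1)[OF v]
  have absorb: "y * a \<in> J" "a * y \<in> J" if "a \<in> J" for a y
    using is_idealD(5,6)[OF J] that by blast+
  show "v * v = v"
    using is_identityD(2)[OF v vJ] .
  have "x * v = v * (x * v)" using is_identityD(2)[OF v absorb(1)[OF vJ]] by simp
  also have "\<dots> = (v * x) * v" by (simp add: mult.assoc)
  also have "\<dots> = v * x" using is_identityD(3)[OF v absorb(2)[OF vJ]] .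
  finally show "x * v = v * x" .
  show "J = range (\<lambda>x. x * v)"
  proof (intro subset_antisym subsetI)
    fix a assume "a \<in> J"
    then show "a \<in> range (\<lambda>x. x * v)"
      using is_identityD(3)[OF v] by (metis rangeI)
  next
    fix a assume "a \<in> range (\<lambda>x. x * v)"
    then show "a \<in> J"
      using absorb(1)[OF vJ] by blast
  qed
qed

section \<open>Groupoids, and why a globalization forces unitality\<close>

lemma partial_actionD:
  assumes "partial_action G m iv R D al"
  shows "e \<in> objects G m iv \<Longrightarrow> is_ideal (D e) R"
    and "g \<in> G \<Longrightarrow> is_ideal (D g) (D (gr m iv g))"
    and "g \<in> G \<Longrightarrow> ring_iso (al g) (D (iv g)) (D g)"
    and "e \<in> objects G m iv \<Longrightarrow> a \<in> D e \<Longrightarrow> al e a = a"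
    and "g \<in> G \<Longrightarrow> h \<in> G \<Longrightarrow> gd m iv g = gr m iv h \<Longrightarrow> a \<in> D (iv h) \<Longrightarrow>
      al h a \<in> D (iv g) \<Longrightarrow> al h a \<in> D h \<Longrightarrow> a \<in> D (iv (m g h))"
    and "g \<in> G \<Longrightarrow> h \<in> G \<Longrightarrow> gd m iv g = gr m iv h \<Longrightarrow> a \<in> D (iv h) \<Longrightarrow>
      al h a \<in> D (iv g) \<Longrightarrow> al h a \<in> D h \<Longrightarrow> al g (al h a) = al (m g h) a"
proof -
  note pa = assms[unfolded partial_action_def]
  show "e \<in> objects G m iv \<Longrightarrow> is_ideal (D e) R"
    using pa by (elim conjE) blast
  show "g \<in> G \<Longrightarrow> is_ideal (D g) (D (gr m iv g))"
    using pa by (elim conjE) blast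
  show "g \<in> G \<Longrightarrow> ring_iso (al g) (D (iv g)) (D g)"
    using pa by (elim conjE) blast
  show "e \<in> objects G m iv \<Longrightarrow> a \<in> D e \<Longrightarrow> al e a = a"
    using pa by (elim conjE) blast
  have P2: "\<forall>g\<in>G. \<forall>h\<in>G. gd m iv g = gr m iv h \<longrightarrow>
      {a \<in> D (iv h). al h a \<in> D (iv g) \<inter> D h} \<subseteq> D (iv (m g h))"
    using pa by (elim conjE)
  have P3: "\<forall>g\<in>G. \<forall>h\<in>G. gd m iv g = gr m iv h \<longrightarrow>
      (\<forall>a\<in>{a \<in> D (iv h). al h a \<in> D (iv g) \<inter> D h}. al g (al h a) = al (m g h) a)"
    using pa by (elim conjE)
  show "g \<in> G \<Longrightarrow> h \<in> G \<Longrightarrow> gd m iv g = gr m iv h \<Longrightarrow> a \<in> D (iv h) \<Longrightarrow>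
      al h a \<in> D (iv g) \<Longrightarrow> al h a \<in> D h \<Longrightarrow> a \<in> D (iv (m g h))"
    using P2 by blast
  show "g \<in> G \<Longrightarrow> h \<in> G \<Longrightarrow> gd m iv g = gr m iv h \<Longrightarrow> a \<in> D (iv h) \<Longrightarrow>
      al h a \<in> D (iv g) \<Longrightarrow> al h a \<in> D h \<Longrightarrow> al g (al h a) = al (m g h) a"
    using P3 by blast
qed

lemma globalizationD:
  assumes "globalization G m iv le D al S E be ph"
  shows "partial_action G m iv S E be"
    and "g \<in> G \<Longrightarrow> E g = E (gr m iv g)"
    and "e \<in> objects G m iv \<Longrightarrow> inj_on (ph e) (D e)"
    and "e \<in> objects G m iv \<Longrightarrow> ring_hom_on (ph e) (D e)"
    and "e \<in> objects G m iv \<Longrightarrow> is_ideal (ph e ` D e) (E e)"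
    and "g \<in> G \<Longrightarrow> ph (gr m iv g) ` D g =
      ph (gr m iv g) ` D (gr m iv g) \<inter> be g ` ph (gd m iv g) ` D (gd m iv g)"
proof -
  note glob = assms[unfolded globalization_def ordered_global_action_def po_action_def]
  show "partial_action G m iv S E be"
    using glob by (elim conjE)
  show "g \<in> G \<Longrightarrow> E g = E (gr m iv g)"
    using glob by (elim conjE) (erule bspec)
  show "e \<in> objects G m iv \<Longrightarrow> inj_on (ph e) (D e)"
    using glob by (elim conjE) blast
  show "e \<in> objects G m iv \<Longrightarrow> ring_hom_on (ph e) (D e)"
    using glob by (elim conjE) blast
  show "e \<in> objects G m iv \<Longrightarrow> is_ideal (ph e ` D e) (E e)"
    using glob by (elim conjE) (erule bspec)
  show "g \<in> G \<Longrightarrow> ph (gr m iv g) ` D g =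
      ph (gr m iv g) ` D (gr m iv g) \<inter> be g ` ph (gd m iv g) ` D (gd m iv g)"
    using glob by (elim conjE) (erule bspec)
qed

lemma preunital_identity:
  assumes "preunital G m iv R D" and "e \<in> objects G m iv"
  obtains u where "is_identity (D e) u"
  using assms unfolding preunital_def is_identity_def by blast

locale gpd =
  fixes G :: "'g set" and m :: "'g \<Rightarrow> 'g \<Rightarrow> 'g" and iv :: "'g \<Rightarrow> 'g"
  assumes groupoid: "groupoid G m iv"
begin

abbreviation d :: "'g \<Rightarrow> 'g" where "d \<equiv> gd m iv"
abbreviation r :: "'g \<Rightarrow> 'g" where "r \<equiv> gr m iv"

lemma inv_closed [simp]: "g \<in> G \<Longrightarrow> iv g \<in> G"
  and inv_inv [simp]: "g \<in> G \<Longrightarrow> iv (iv g) = g"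
  and comp_closed [simp]: "g \<in> G \<Longrightarrow> h \<in> G \<Longrightarrow> d g = r h \<Longrightarrow> m g h \<in> G"
  and d_comp [simp]: "g \<in> G \<Longrightarrow> h \<in> G \<Longrightarrow> d g = r h \<Longrightarrow> d (m g h) = d h"
  and r_comp [simp]: "g \<in> G \<Longrightarrow> h \<in> G \<Longrightarrow> d g = r h \<Longrightarrow> r (m g h) = r g"
  and comp_r_left [simp]: "g \<in> G \<Longrightarrow> m (r g) g = g"
  and comp_d_right [simp]: "g \<in> G \<Longrightarrow> m g (d g) = g"
  using groupoid unfolding groupoid_def by blast+

lemma comp_assoc:
  "g \<in> G \<Longrightarrow> h \<in> G \<Longrightarrow> k \<in> G \<Longrightarrow> d g = r h \<Longrightarrow> d h = r k \<Longrightarrow> m (m g h) k = m g (m h k)"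
  using groupoid unfolding groupoid_def by blast

lemma comp_inv_left: "m (iv g) g = d g"
  by (simp add: gd_def)

lemma comp_inv_right: "m g (iv g) = r g"
  by (simp add: gr_def)

lemma d_inv [simp]: "g \<in> G \<Longrightarrow> d (iv g) = r g"
  and r_inv [simp]: "g \<in> G \<Longrightarrow> r (iv g) = d g"
  by (simp_all add: gd_def gr_def)

lemma d_closed [simp]: "g \<in> G \<Longrightarrow> d g \<in> G"
  using comp_closed[of "iv g" g] by (simp add: comp_inv_left)

lemma r_closed [simp]: "g \<in> G \<Longrightarrow> r g \<in> G"
  using d_closed[of "iv g"] by simp

lemma d_d [simp]: "g \<in> G \<Longrightarrow> d (d g) = d g"
  and r_d [simp]: "g \<in> G \<Longrightarrow> r (d g) = d g"
  using d_comp[of "iv g" g] r_comp[of "iv g" g] by (simp_all add: comp_inv_left)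

lemma inv_d [simp]: "g \<in> G \<Longrightarrow> iv (d g) = d g"
proof -
  assume g: "g \<in> G"
  have "iv (d g) = m (d g) (iv (d g))"
    using comp_r_left[of "iv (d g)"] g by simp
  also have "\<dots> = d g"
    using g by (simp add: comp_inv_right)
  finally show ?thesis .
qed

lemma comp_inv_cancel:
  assumes "g \<in> G" and "x \<in> G" and "r x = r g"
  shows "m g (m (iv g) x) = x"
  using assms comp_assoc[of g "iv g" x] comp_r_left[of x] by (simp add: comp_inv_right)

lemma inv_eqI:
  assumes p: "p \<in> G" and q: "q \<in> G" and pq: "d p = r q" "m p q = r p"
  shows "iv p = q"
proof -
  have "iv p = m (iv p) (m p q)"
    using p comp_d_right[of "iv p"] by (simp add: pq)
  also have "\<dots> = m (m (iv p) p) q"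
    using comp_assoc[of "iv p" p q] p q pq by simp
  also have "\<dots> = q"
    using comp_r_left[OF q] by (simp add: comp_inv_left pq)
  finally show ?thesis .
qed

lemma inv_comp:
  assumes g: "g \<in> G" and h: "h \<in> G" and gh: "d g = r h"
  shows "iv (m g h) = m (iv h) (iv g)"
proof (rule inv_eqI)
  have "m (m g h) (m (iv h) (iv g)) = m g (m h (m (iv h) (iv g)))"
    using comp_assoc[of g h "m (iv h) (iv g)"] assms by simp
  also have "\<dots> = r (m g h)"
    using comp_inv_cancel[of h "iv g"] assms by (simp add: comp_inv_right)
  finally show "m (m g h) (m (iv h) (iv g)) = r (m g h)" .
qed (use assms in simp_all)

lemma object_closed: "e \<in> objects G m iv \<Longrightarrow> e \<in> G"
  and object_d [simp]: "e \<in> objects G m iv \<Longrightarrow> d e = e"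
  and object_r [simp]: "e \<in> objects G m iv \<Longrightarrow> r e = e"
  and object_inv [simp]: "e \<in> objects G m iv \<Longrightarrow> iv e = e"
  unfolding objects_def by auto

lemma d_in_objects [simp]: "g \<in> G \<Longrightarrow> d g \<in> objects G m iv"
  and r_in_objects [simp]: "g \<in> G \<Longrightarrow> r g \<in> objects G m iv"
  unfolding objects_def using d_inv[of g] by (auto intro!: image_eqI[of _ d "iv g"])

lemma globalization_identity:
  fixes D :: "'g \<Rightarrow> 'a::ring set" and S :: "'b::ring set"
  assumes glob: "globalization G m iv le D al S E be ph" and g: "g \<in> G"
    and o1: "is_identity (D (r g)) o1" and o2: "is_identity (D (d g)) o2"
  shows "is_identity (ph (r g) ` D g) (ph (r g) o1 * be g (ph (d g) o2))"
proof -
  have "E (iv g) = E (d g)" "E g = E (r g)"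
    using globalizationD(2)[OF glob, of "iv g"] globalizationD(2)[OF glob, of g] g by simp_all
  then have iso: "ring_iso (be g) (E (d g)) (E (r g))"
    using partial_actionD(3)[OF globalizationD(1)[OF glob] g] by simp
  have Id: "is_ideal (ph (d g) ` D (d g)) (E (d g))" and Ir: "is_ideal (ph (r g) ` D (r g)) (E (r g))"
    using globalizationD(5)[OF glob] g by simp_all
  have be_hom: "ring_hom_on (be g) (ph (d g) ` D (d g))"
    using iso ring_hom_on_subset[OF _ is_idealD(1)[OF Id]] unfolding ring_iso_def by blast
  have "is_identity (ph (r g) ` D (r g)) (ph (r g) o1)"
    using is_identity_image[OF globalizationD(4)[OF glob r_in_objects[OF g]] o1] .
  moreover have "is_identity (be g ` ph (d g) ` D (d g)) (be g (ph (d g) o2))"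
    using is_identity_image[OF be_hom
        is_identity_image[OF globalizationD(4)[OF glob d_in_objects[OF g]] o2]] .
  ultimately show ?thesis
    using is_identity_Int_ideals[OF Ir ideal_image_ring_iso[OF iso Id]] globalizationD(6)[OF glob g]
    by simp
qed

lemma unital_if_globalization:
  fixes D :: "'g \<Rightarrow> 'a::ring set" and S :: "'b::ring set"
  assumes action: "partial_action G m iv UNIV D al" and preunital: "preunital G m iv UNIV D"
    and glob: "globalization G m iv le D al S E be ph"
  shows "unital G UNIV D"
  unfolding unital_def
proof (intro ballI)
  fix g assume g: "g \<in> G"
  obtain o1 where o1: "is_identity (D (r g)) o1"
    using preunital_identity[OF preunital r_in_objects[OF g]] .
  obtain o2 where o2: "is_identity (D (d g)) o2"
    using preunital_identity[OF preunital d_in_objects[OF g]] .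
  have Dr: "is_ideal (D (r g)) UNIV" and Dg: "is_ideal (D g) (D (r g))"
    using partial_actionD(1,2)[OF action] g by simp_all
  obtain v where v: "v \<in> D g" "is_identity (ph (r g) ` D g) (ph (r g) v)"
    using globalization_identity[OF glob g o1 o2] by (metis imageE is_identityD(1))
  have "is_identity (D g) v"
  proof (rule is_identity_from_image)
    show "inj_on (ph (r g)) (D (r g))" "ring_hom_on (ph (r g)) (D (r g))"
      using globalizationD(3,4)[OF glob] g by simp_all
    show "D g \<subseteq> D (r g)"
      using is_idealD(1)[OF Dg] .
    show "v * x \<in> D (r g) \<and> x * v \<in> D (r g)" if "x \<in> D g" for x
      using is_idealD(5,6)[OF Dr] is_idealD(1)[OF Dg] that by blast
  qed (use v in simp_all)
  moreover have "is_ideal (D g) UNIV"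
    using ideal_of_unital_ideal[OF Dr o1 Dg] .
  ultimately show "\<exists>u\<in>UNIV. u * u = u \<and> (\<forall>x\<in>UNIV. x * u = u * x) \<and> D g = (\<lambda>x. x * u) ` UNIV"
    using ideal_with_identity_principal by blast
qed

end

section \<open>Restriction and translation in ordered groupoids\<close>

locale ordered_gpd =
  fixes G :: "'g set" and m :: "'g \<Rightarrow> 'g \<Rightarrow> 'g" and iv :: "'g \<Rightarrow> 'g"
    and le :: "'g \<Rightarrow> 'g \<Rightarrow> bool"
  assumes ordered_groupoid: "ordered_groupoid G m iv le"

sublocale ordered_gpd \<subseteq> gpd
  by unfold_locales (use ordered_groupoid[unfolded ordered_groupoid_def] in \<open>elim conjE\<close>)

context ordered_gpd
begin

lemma le_refl [simp]: "g \<in> G \<Longrightarrow> le g g"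
proof -
  have "\<forall>g\<in>G. le g g"
    using ordered_groupoid[unfolded ordered_groupoid_def] by (elim conjE)
  then show "g \<in> G \<Longrightarrow> le g g" by blast
qed

lemma le_trans: "g \<in> G \<Longrightarrow> h \<in> G \<Longrightarrow> k \<in> G \<Longrightarrow> le g h \<Longrightarrow> le h k \<Longrightarrow> le g k"
proof -
  have "\<forall>g\<in>G. \<forall>h\<in>G. \<forall>k\<in>G. le g h \<longrightarrow> le h k \<longrightarrow> le g k"
    using ordered_groupoid[unfolded ordered_groupoid_def] by (elim conjE)
  then show "g \<in> G \<Longrightarrow> h \<in> G \<Longrightarrow> k \<in> G \<Longrightarrow> le g h \<Longrightarrow> le h k \<Longrightarrow> le g k" by blast
qed

lemma le_inv: "g \<in> G \<Longrightarrow> h \<in> G \<Longrightarrow> le g h \<Longrightarrow> le (iv g) (iv h)"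
proof -
  have "\<forall>g\<in>G. \<forall>h\<in>G. le g h \<longrightarrow> le (iv g) (iv h)"
    using ordered_groupoid[unfolded ordered_groupoid_def] by (elim conjE)
  then show "g \<in> G \<Longrightarrow> h \<in> G \<Longrightarrow> le g h \<Longrightarrow> le (iv g) (iv h)" by blast
qed

lemma le_comp:
  "g \<in> G \<Longrightarrow> h \<in> G \<Longrightarrow> k \<in> G \<Longrightarrow> l \<in> G \<Longrightarrow> le g h \<Longrightarrow> le k l \<Longrightarrow>
    d g = r k \<Longrightarrow> d h = r l \<Longrightarrow> le (m g k) (m h l)"
proof -
  have "\<forall>g\<in>G. \<forall>h\<in>G. \<forall>k\<in>G. \<forall>l\<in>G. le g h \<longrightarrow> le k l \<longrightarrow>
      d g = r k \<longrightarrow> d h = r l \<longrightarrow> le (m g k) (m h l)"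
    using ordered_groupoid[unfolded ordered_groupoid_def] by (elim conjE)
  then show "g \<in> G \<Longrightarrow> h \<in> G \<Longrightarrow> k \<in> G \<Longrightarrow> l \<in> G \<Longrightarrow> le g h \<Longrightarrow> le k l \<Longrightarrow>
    d g = r k \<Longrightarrow> d h = r l \<Longrightarrow> le (m g k) (m h l)" by blast
qed

lemma restriction_d:
  "g \<in> G \<Longrightarrow> e \<in> objects G m iv \<Longrightarrow> le e (d g) \<Longrightarrow> \<exists>!k. k \<in> G \<and> le k g \<and> d k = e"
proof -
  have "\<forall>g\<in>G. \<forall>e\<in>objects G m iv. le e (d g) \<longrightarrow> (\<exists>!k. k \<in> G \<and> le k g \<and> d k = e)"
    using ordered_groupoid[unfolded ordered_groupoid_def] by (elim conjE)
  then show "g \<in> G \<Longrightarrow> e \<in> objects G m iv \<Longrightarrow> le e (d g) \<Longrightarrow> \<exists>!k. k \<in> G \<and> le k g \<and> d k = e"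
    by blast
qed

lemma restriction_r:
  "g \<in> G \<Longrightarrow> e \<in> objects G m iv \<Longrightarrow> le e (r g) \<Longrightarrow> \<exists>!k. k \<in> G \<and> le k g \<and> r k = e"
proof -
  have "\<forall>g\<in>G. \<forall>e\<in>objects G m iv. le e (r g) \<longrightarrow> (\<exists>!k. k \<in> G \<and> le k g \<and> r k = e)"
    using ordered_groupoid[unfolded ordered_groupoid_def] by (elim conjE)
  then show "g \<in> G \<Longrightarrow> e \<in> objects G m iv \<Longrightarrow> le e (r g) \<Longrightarrow> \<exists>!k. k \<in> G \<and> le k g \<and> r k = e"
    by blast
qed

lemma le_d: "g \<in> G \<Longrightarrow> h \<in> G \<Longrightarrow> le g h \<Longrightarrow> le (d g) (d h)"
  using le_comp[of "iv g" "iv h" g h] le_inv by (simp add: comp_inv_left)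

lemma le_r: "g \<in> G \<Longrightarrow> h \<in> G \<Longrightarrow> le g h \<Longrightarrow> le (r g) (r h)"
  using le_comp[of g h "iv g" "iv h"] le_inv by (simp add: comp_inv_right)

lemma below_eq_if_d_eq:
  assumes g: "g \<in> G" and "k \<in> G" "k' \<in> G" "le k g" "le k' g" "d k = d k'"
  shows "k = k'"
proof -
  have ex1: "\<exists>!x. x \<in> G \<and> le x g \<and> d x = d k"
    using restriction_d[of g "d k"] le_d[of k g] assms by simp
  have "(THE x. x \<in> G \<and> le x g \<and> d x = d k) = k"
    by (rule the1_equality[OF ex1]) (use assms in simp)
  moreover have "(THE x. x \<in> G \<and> le x g \<and> d x = d k) = k'"
    by (rule the1_equality[OF ex1]) (use assms in simp)
  ultimately show ?thesis by simp
qed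

lemma below_eq_if_r_eq:
  assumes g: "g \<in> G" and "k \<in> G" "k' \<in> G" "le k g" "le k' g" "r k = r k'"
  shows "k = k'"
proof -
  have ex1: "\<exists>!x. x \<in> G \<and> le x g \<and> r x = r k"
    using restriction_r[of g "r k"] le_r[of k g] assms by simp
  have "(THE x. x \<in> G \<and> le x g \<and> r x = r k) = k"
    by (rule the1_equality[OF ex1]) (use assms in simp)
  moreover have "(THE x. x \<in> G \<and> le x g \<and> r x = r k) = k'"
    by (rule the1_equality[OF ex1]) (use assms in simp)
  ultimately show ?thesis by simp
qed

lemma le_if_le_d:
  assumes g: "g \<in> G" and h: "h \<in> G" and k: "k \<in> G" and "le h g" "le k g" "le (d h) (d k)"
  shows "le h k"
proof -
  obtain h' where h': "h' \<in> G" "le h' k" "d h' = d h"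
    using ex1_implies_ex[OF restriction_d[of k "d h"]] assms by auto
  then have "le h' g"
    using le_trans[of h' k g] assms by blast
  then have "h' = h"
    using below_eq_if_d_eq[of g h' h] h' assms by blast
  then show ?thesis
    using h' by simp
qed

definition res :: "'g \<Rightarrow> 'g \<Rightarrow> 'g" where
  "res e g = (THE k. k \<in> G \<and> le k g \<and> r k = e)"

lemma res_eqI:
  assumes "g \<in> G" "k \<in> G" "le k g" "r k = e"
  shows "res e g = k"
  unfolding res_def
proof (rule the_equality)
  show "k \<in> G \<and> le k g \<and> r k = e"
    using assms by simp
  fix x assume "x \<in> G \<and> le x g \<and> r x = e"
  then show "x = k"
    using below_eq_if_r_eq[of g x k] assms by simp
qed

lemma res:
  assumes "g \<in> G" "e \<in> objects G m iv" "le e (r g)"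
  shows "res e g \<in> G" and "le (res e g) g" and "r (res e g) = e"
proof -
  obtain k where "k \<in> G" "le k g" "r k = e"
    using ex1_implies_ex[OF restriction_r[OF assms]] by blast
  with res_eqI[OF assms(1) this] show "res e g \<in> G" "le (res e g) g" "r (res e g) = e"
    by simp_all
qed

definition supported_below :: "('g \<Rightarrow> 'b::zero) \<Rightarrow> 'g \<Rightarrow> bool" where
  "supported_below f e \<longleftrightarrow> (\<forall>x. f x \<noteq> 0 \<longrightarrow> x \<in> G \<and> le (r x) e)"

definition translate :: "'g \<Rightarrow> ('g \<Rightarrow> 'b::zero) \<Rightarrow> 'g \<Rightarrow> 'b" where
  "translate g f x = (if x \<in> G \<and> le (r x) (r g) then f (m (iv (res (r x) g)) x) else 0)"

lemma supported_below_zero: "supported_below 0 e"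
  unfolding supported_below_def by simp

lemma supported_below_add:
  fixes f f' :: "'g \<Rightarrow> 'b::monoid_add"
  assumes "supported_below f e" and "supported_below f' e"
  shows "supported_below (f + f') e"
  unfolding supported_below_def
proof (intro allI impI)
  fix x assume "(f + f') x \<noteq> 0"
  then have "f x \<noteq> 0 \<or> f' x \<noteq> 0"
    by auto
  then show "x \<in> G \<and> le (r x) e"
    using assms unfolding supported_below_def by blast
qed

lemma supported_below_mono:
  assumes f: "supported_below f e" and "e \<in> G" "e' \<in> G" "le e e'"
  shows "supported_below f e'"
  unfolding supported_below_def
proof (intro allI impI)
  fix x assume "f x \<noteq> 0"
  then have "x \<in> G" "le (r x) e"
    using f unfolding supported_below_def by blast+
  then show "x \<in> G \<and> le (r x) e'"
    using le_trans[of "r x" e e'] assms by simp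
qed

lemma translate_zero: "translate g 0 = 0"
  by (rule ext) (simp add: translate_def)

lemma translate_add:
  fixes f f' :: "'g \<Rightarrow> 'b::monoid_add"
  shows "translate g (f + f') = translate g f + translate g f'"
  by (rule ext) (simp add: translate_def)

lemma translate_mult:
  fixes f f' :: "'g \<Rightarrow> 'b::mult_zero"
  shows "translate g (f * f') = translate g f * translate g f'"
  by (rule ext) (simp add: translate_def)

lemma translate_comp:
  assumes g: "g \<in> G" and h: "h \<in> G" and gh: "d g = r h" and f: "supported_below f (d h)"
  shows "translate g (translate h f) = translate (m g h) f"
proof (rule ext)
  fix x
  show "translate g (translate h f) x = translate (m g h) f x"
  proof (cases "x \<in> G \<and> le (r x) (r g)")
    case True
    define k where "k = res (r x) g"
    have k: "k \<in> G" "le k g" "r k = r x"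
      using res[of g "r x"] True g unfolding k_def by auto
    have y: "m (iv k) x \<in> G" "r (m (iv k) x) = d k"
      using k True by simp_all
    have "le (d k) (r h)"
      using le_d[OF k(1) g k(2)] gh by simp
    define k' where "k' = res (d k) h"
    have k': "k' \<in> G" "le k' h" "r k' = d k"
      using res[of h "d k"] \<open>le (d k) (r h)\<close> h k unfolding k'_def by auto
    have "translate g (translate h f) x = translate h f (m (iv k) x)"
      using True unfolding translate_def[of g] k_def by simp
    also have "\<dots> = f (m (iv k') (m (iv k) x))"
      using y \<open>le (d k) (r h)\<close> unfolding translate_def k'_def by simp
    also have "m (iv k') (m (iv k) x) = m (iv (m k k')) x"
      using inv_comp[of k k'] comp_assoc[of "iv k'" "iv k" x] k k' True by simp
    also have "res (r x) (m g h) = m k k'"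
      using k k' g h gh le_comp[of k g k' h] by (intro res_eqI) simp_all
    then have "f (m (iv (m k k')) x) = translate (m g h) f x"
      unfolding translate_def using True g h gh by simp
    finally show ?thesis .
  next
    case False
    then show ?thesis
      unfolding translate_def[of g] translate_def[of "m g h"] using g h gh by auto
  qed
qed

lemma res_eq_res_of_le:
  assumes k: "k \<in> G" and g: "g \<in> G" and kg: "le k g" and x: "x \<in> G" "le (r x) (r k)"
  shows "res (r x) k = res (r x) g"
proof -
  have "res (r x) k \<in> G" "le (res (r x) k) k" "r (res (r x) k) = r x"
    using res[of k "r x"] k x by auto
  then show ?thesis
    using le_trans[of "res (r x) k" k g] k g kg by (intro res_eqI[symmetric]) simp_all
qed

lemma d_res_not_le:
  assumes k: "k \<in> G" and g: "g \<in> G" and kg: "le k g"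
    and x: "x \<in> G" "le (r x) (r g)" "\<not> le (r x) (r k)"
  shows "\<not> le (d (res (r x) g)) (d k)"
proof
  have k': "res (r x) g \<in> G" "le (res (r x) g) g" "r (res (r x) g) = r x"
    using res[of g "r x"] g x by auto
  assume "le (d (res (r x) g)) (d k)"
  then have "le (res (r x) g) k"
    using le_if_le_d[OF g k'(1) k k'(2) kg] by simp
  then show False
    using le_r[of "res (r x) g" k] k' k x by simp
qed

lemma translate_le:
  assumes k: "k \<in> G" and g: "g \<in> G" and kg: "le k g" and f: "supported_below f (d k)"
  shows "translate k f = translate g f"
proof (rule ext)
  fix x
  have rkg: "le (r k) (r g)"
    using le_r k g kg by simp
  consider (below_k) "x \<in> G" "le (r x) (r k)"
    | (below_g) "x \<in> G" "\<not> le (r x) (r k)" "le (r x) (r g)"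
    | (outside) "\<not> (x \<in> G \<and> le (r x) (r g))"
    using le_trans[of "r x" "r k" "r g"] rkg k g by auto
  then show "translate k f x = translate g f x"
  proof cases
    case below_k
    then show ?thesis
      unfolding translate_def using res_eq_res_of_le[OF k g kg] le_trans[of "r x" "r k" "r g"] rkg k g
      by simp
  next
    case below_g
    have "m (iv (res (r x) g)) x \<in> G" "r (m (iv (res (r x) g)) x) = d (res (r x) g)"
      using res[of g "r x"] below_g g by simp_all
    then have "f (m (iv (res (r x) g)) x) = 0"
      using f d_res_not_le[OF k g kg] below_g unfolding supported_below_def by auto
    then show ?thesis
      unfolding translate_def using below_g by simp
  next
    case outside
    then show ?thesis
      unfolding translate_def using le_trans[of "r x" "r k" "r g"] rkg k g by auto
  qed
qed

lemma translate_object: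
  assumes e: "e \<in> objects G m iv" and f: "supported_below f e"
  shows "translate e f = f"
proof (rule ext)
  fix x
  show "translate e f x = f x"
  proof (cases "x \<in> G \<and> le (r x) e")
    case True
    then have "res (r x) e = r x"
      using e object_closed by (intro res_eqI) simp_all
    then show ?thesis
      unfolding translate_def using True e by simp
  next
    case False
    then show ?thesis
      using f e unfolding translate_def supported_below_def by auto
  qed
qed

end

section \<open>Unital partial actions\<close>

locale unital_partial_action = ordered_gpd G m iv le
  for G :: "'g set" and m iv le +
  fixes D :: "'g \<Rightarrow> 'a::ring set" and al :: "'g \<Rightarrow> 'a \<Rightarrow> 'a"
  assumes partial_action: "partial_action G m iv UNIV D al"
    and unital: "unital G UNIV D"
begin

definition one :: "'g \<Rightarrow> 'a" where
  "one g = (SOME u. u * u = u \<and> (\<forall>x. x * u = u * x) \<and> D g = range (\<lambda>x. x * u))"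

lemma one_idem: "g \<in> G \<Longrightarrow> one g * one g = one g"
  and one_central: "g \<in> G \<Longrightarrow> x * one g = one g * x"
  and D_eq: "g \<in> G \<Longrightarrow> D g = range (\<lambda>x. x * one g)"
proof -
  assume g: "g \<in> G"
  have "\<exists>u. u * u = u \<and> (\<forall>x. x * u = u * x) \<and> D g = range (\<lambda>x. x * u)"
    using unital g unfolding unital_def by blast
  then have "one g * one g = one g \<and> (\<forall>x. x * one g = one g * x) \<and> D g = range (\<lambda>x. x * one g)"
    unfolding one_def by (rule someI_ex)
  then show "one g * one g = one g" "x * one g = one g * x" "D g = range (\<lambda>x. x * one g)"
    by blast+
qed

lemma D_identity: "g \<in> G \<Longrightarrow> is_identity (D g) (one g)"
  using is_identity_principal[OF one_idem one_central] D_eq by simp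

lemma D_ideal: "g \<in> G \<Longrightarrow> is_ideal (D g) UNIV"
  using principal_ideal[OF one_central] D_eq by simp

lemma one_in_D [simp]: "g \<in> G \<Longrightarrow> one g \<in> D g"
  using is_identityD(1)[OF D_identity] .

lemma mult_one_in_D [simp]: "g \<in> G \<Longrightarrow> x * one g \<in> D g"
  using D_eq by blast

lemma D_mult_one: "g \<in> G \<Longrightarrow> x \<in> D g \<Longrightarrow> x * one g = x"
  and D_one_mult: "g \<in> G \<Longrightarrow> x \<in> D g \<Longrightarrow> one g * x = x"
  using is_identityD(2,3)[OF D_identity] by blast+

lemma D_mult_left: "g \<in> G \<Longrightarrow> x \<in> D g \<Longrightarrow> y * x \<in> D g"
  and D_mult_right: "g \<in> G \<Longrightarrow> x \<in> D g \<Longrightarrow> x * y \<in> D g"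
  using is_idealD(5,6)[OF D_ideal] by blast+

lemma D_subset_r: "g \<in> G \<Longrightarrow> D g \<subseteq> D (r g)"
  using is_idealD(1)[OF partial_actionD(2)[OF partial_action]] .

lemma D_zero: "g \<in> G \<Longrightarrow> 0 \<in> D g"
  and D_add: "g \<in> G \<Longrightarrow> x \<in> D g \<Longrightarrow> y \<in> D g \<Longrightarrow> x + y \<in> D g"
  and D_uminus: "g \<in> G \<Longrightarrow> x \<in> D g \<Longrightarrow> - x \<in> D g"
  using is_idealD(2,3,4)[OF D_ideal] by blast+

lemma al_iso: "g \<in> G \<Longrightarrow> ring_iso (al g) (D (iv g)) (D g)"
  using partial_actionD(3)[OF partial_action] .

lemma al_in: "g \<in> G \<Longrightarrow> a \<in> D (iv g) \<Longrightarrow> al g a \<in> D g"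
  using al_iso unfolding ring_iso_def bij_betw_def by blast

lemma al_add: "g \<in> G \<Longrightarrow> a \<in> D (iv g) \<Longrightarrow> b \<in> D (iv g) \<Longrightarrow> al g (a + b) = al g a + al g b"
  and al_mult: "g \<in> G \<Longrightarrow> a \<in> D (iv g) \<Longrightarrow> b \<in> D (iv g) \<Longrightarrow> al g (a * b) = al g a * al g b"
  using al_iso unfolding ring_iso_def ring_hom_on_def by blast+

lemma al_zero: "g \<in> G \<Longrightarrow> al g 0 = 0"
  using ring_hom_on_zero[of "al g" "D (iv g)"] al_iso D_zero[of "iv g"]
  unfolding ring_iso_def by simp

lemma al_object: "e \<in> objects G m iv \<Longrightarrow> a \<in> D e \<Longrightarrow> al e a = a"
  using partial_actionD(4)[OF partial_action] .

lemma al_comp: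
  assumes "g \<in> G" "h \<in> G" "d g = r h" "a \<in> D (iv h)" "al h a \<in> D (iv g)"
  shows "al g (al h a) = al (m g h) a"
  using partial_actionD(6)[OF partial_action] al_in assms by blast

lemma al_inv:
  assumes g: "g \<in> G" and a: "a \<in> D (iv g)"
  shows "al (iv g) (al g a) = a"
proof -
  have "al (iv g) (al g a) = al (d g) a"
    using al_comp[of "iv g" g a] al_in g a by (simp add: comp_inv_left)
  also have "\<dots> = a"
    using al_object[of "d g" a] D_subset_r[of "iv g"] g a by auto
  finally show ?thesis .
qed

lemma al_in_comp:
  assumes g: "g \<in> G" and l: "l \<in> G" and gl: "d g = r l"
    and a: "a \<in> D (iv g)" "a \<in> D l"
  shows "al g a \<in> D (m g l)"
proof -
  have "al (iv g) (al g a) \<in> D l"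
    using al_inv g a by simp
  then have "al g a \<in> D (iv (m (iv l) (iv g)))"
    using partial_actionD(5)[OF partial_action, of "iv l" "iv g" "al g a"] al_in g l gl a
    by simp
  then show ?thesis
    using inv_comp[of "iv l" "iv g"] g l gl by simp
qed

lemma al_image_Int:
  assumes g: "g \<in> G" and l: "l \<in> G" and gl: "d g = r l"
  shows "al g ` (D (iv g) \<inter> D l) = D g \<inter> D (m g l)"
proof (intro subset_antisym subsetI)
  fix y assume "y \<in> al g ` (D (iv g) \<inter> D l)"
  then show "y \<in> D g \<inter> D (m g l)"
    using al_in al_in_comp g l gl by blast
next
  fix y assume y: "y \<in> D g \<inter> D (m g l)"
  have "m (iv g) (m g l) = l"
    using comp_assoc[of "iv g" g l] g l gl by (simp add: comp_inv_left)
  then have "al (iv g) y \<in> D (iv g) \<inter> D l"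
    using al_in_comp[of "iv g" "m g l" y] al_in[of "iv g" y] g l gl y by simp
  moreover have "y = al g (al (iv g) y)"
    using al_inv[of "iv g" y] g y by simp
  ultimately show "y \<in> al g ` (D (iv g) \<inter> D l)"
    by blast
qed

lemma al_one_mult_one:
  assumes g: "g \<in> G" and l: "l \<in> G" and gl: "d g = r l"
  shows "al g (one (iv g) * one l) = one g * one (m g l)"
proof -
  have hom: "ring_hom_on (al g) (D (iv g) \<inter> D l)"
    using al_iso[OF g] ring_hom_on_subset[of "al g" "D (iv g)"] unfolding ring_iso_def by blast
  have "is_identity (D (iv g) \<inter> D l) (one (iv g) * one l)"
    using is_identity_Int_ideals[OF D_ideal D_ideal D_identity D_identity] g l by simp
  from is_identity_image[OF hom this]
  have "is_identity (D g \<inter> D (m g l)) (al g (one (iv g) * one l))"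
    using al_image_Int[OF g l gl] by simp
  moreover have "is_identity (D g \<inter> D (m g l)) (one g * one (m g l))"
    using is_identity_Int_ideals[OF D_ideal D_ideal D_identity D_identity] g l gl by simp
  ultimately show ?thesis
    by (rule is_identity_unique)
qed

lemma al_mult_one:
  assumes g: "g \<in> G" and l: "l \<in> G" and gl: "d g = r l" and a: "a \<in> D (iv g)"
  shows "al g (a * one l) = al g a * one (m g l)"
proof -
  have "a * one l = a * (one (iv g) * one l)"
    using D_mult_one[of "iv g" a] g a by (simp add: mult.assoc[symmetric])
  then have "al g (a * one l) = al g a * al g (one (iv g) * one l)"
    using al_mult[of g a "one (iv g) * one l"] D_mult_right[of "iv g" "one (iv g)"] g a by simp
  also have "\<dots> = (al g a * one g) * one (m g l)"
    using al_one_mult_one[OF g l gl] by (simp add: mult.assoc)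
  also have "al g a * one g = al g a"
    using D_mult_one al_in g a by blast
  finally show ?thesis .
qed

lemma al_one_inv: "g \<in> G \<Longrightarrow> al g (one (iv g)) = one g"
proof -
  assume g: "g \<in> G"
  have "is_identity (al g ` D (iv g)) (al g (one (iv g)))"
    using is_identity_image[of "al g" "D (iv g)"] al_iso[OF g] D_identity[of "iv g"] g
    unfolding ring_iso_def by simp
  moreover have "al g ` D (iv g) = D g"
    using al_iso[OF g] unfolding ring_iso_def bij_betw_def by blast
  ultimately show ?thesis
    using is_identity_unique D_identity[OF g] by metis
qed

definition pull :: "'g \<Rightarrow> 'a \<Rightarrow> 'a" where
  "pull y a = al (iv y) (a * one y)"

lemma pull_in: "y \<in> G \<Longrightarrow> pull y a \<in> D (iv y)"
  unfolding pull_def using al_in[of "iv y"] by simp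

lemma pull_zero: "y \<in> G \<Longrightarrow> pull y 0 = 0"
  unfolding pull_def using al_zero[of "iv y"] by simp

lemma pull_add: "y \<in> G \<Longrightarrow> pull y (a + b) = pull y a + pull y b"
  unfolding pull_def using al_add[of "iv y" "a * one y" "b * one y"] by (simp add: distrib_right)

lemma pull_mult: "y \<in> G \<Longrightarrow> pull y (a * b) = pull y a * pull y b"
proof -
  assume y: "y \<in> G"
  have "(a * one y) * (b * one y) = a * ((one y * one y) * b)"
    using one_central[OF y, of b] by (simp add: mult.assoc)
  also have "\<dots> = a * b * one y"
    using one_idem[OF y] one_central[OF y, of b] by (simp add: mult.assoc)
  finally show ?thesis
    unfolding pull_def using al_mult[of "iv y" "a * one y" "b * one y"] y by simp
qed

lemma pull_one_r:
  assumes y: "y \<in> G"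
  shows "pull y (one (r y)) = one (iv y)"
proof -
  have "one y \<in> D (r y)"
    using D_subset_r[OF y] one_in_D[OF y] by blast
  then have "one (r y) * one y = one y"
    using D_one_mult[of "r y"] y by simp
  then show ?thesis
    unfolding pull_def using al_one_inv[of "iv y"] y by simp
qed

lemma pull_al:
  assumes x: "x \<in> G" and g: "g \<in> G" and xg: "r x = r g" and a: "a \<in> D (iv g)"
  shows "pull x (al g a) = pull (m (iv g) x) a"
proof -
  define l where "l = m (iv g) x"
  have l: "l \<in> G" "r l = d g" "m g l = x" "m (iv x) g = iv l"
    using x g xg comp_inv_cancel[of g x] inv_comp[of "iv g" x] unfolding l_def by simp_all
  have eq: "al g (a * one l) = al g a * one x"
    using al_mult_one[of g l a] l g a by simp
  have "al (iv x) (al g (a * one l)) = al (m (iv x) g) (a * one l)"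
    by (rule al_comp) (use x g xg a l eq D_mult_right in simp_all)
  then show ?thesis
    unfolding pull_def l_def[symmetric] using eq l by simp
qed

lemma pull_mult_one_inv:
  assumes y: "y \<in> G" and k: "k \<in> G" and ky: "d k = r y"
  shows "pull y b * one (iv (m k y)) = pull y (b * one (iv k))"
proof -
  have "al (iv y) (b * one y * one (iv k)) = al (iv y) (b * one y) * one (m (iv y) (iv k))"
    by (rule al_mult_one) (use y k ky in simp_all)
  moreover have "m (iv y) (iv k) = iv (m k y)"
    using inv_comp[OF k y ky] by simp
  moreover have "b * one y * one (iv k) = b * one (iv k) * one y"
    using one_central[of y "one (iv k)"] y by (simp add: mult.assoc)
  ultimately show ?thesis
    unfolding pull_def by simp
qed

section \<open>The globalization of a unital action\<close>

text \<open>\<open>embed e\<close>, \<open>translate g\<close> and \<open>glob_ideal g\<close> are the \<open>\<phi>\<^sub>e\<close>, \<open>\<beta>\<^sub>g\<close> and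
  \<open>B\<^sub>g\<close> of the globalization, and \<open>gen h b\<close> is \<open>\<beta>\<^sub>h (\<phi>\<^bsub>d h\<^esub> b)\<close> in closed form
  (\<open>translate_embed\<close>).  Condition (iv) leaves no choice for \<open>glob_ideal\<close>.\<close>

definition embed :: "'g \<Rightarrow> 'a \<Rightarrow> 'g \<Rightarrow> 'a" where
  "embed e a x = (if x \<in> G \<and> r x = e then pull x a else 0)"

definition gen :: "'g \<Rightarrow> 'a \<Rightarrow> 'g \<Rightarrow> 'a" where
  "gen h b x = (if x \<in> G \<and> r x = r h then pull (m (iv h) x) b else 0)"

lemma embed_add: "embed e (a + b) = embed e a + embed e b"
  and embed_mult: "embed e (a * b) = embed e a * embed e b"
  by (rule ext, simp add: embed_def pull_add pull_mult)+

lemma gen_zero: "h \<in> G \<Longrightarrow> gen h 0 = 0"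
  and gen_add: "h \<in> G \<Longrightarrow> gen h (a + b) = gen h a + gen h b"
  and gen_mult: "h \<in> G \<Longrightarrow> gen h (a * b) = gen h a * gen h b"
  by (rule ext, simp add: gen_def pull_zero pull_add pull_mult)+

lemma gen_uminus: "h \<in> G \<Longrightarrow> gen h (- a) = - gen h a"
  using gen_add[of h "- a" a] by (simp add: gen_zero eq_neg_iff_add_eq_0)

lemma gen_image_zero: "h \<in> G \<Longrightarrow> 0 \<in> gen h ` D (d h)"
  by (rule image_eqI[of _ _ 0]) (simp_all add: gen_zero D_zero)

lemma gen_image_add:
  assumes h: "h \<in> G" and "x \<in> gen h ` D (d h)" "y \<in> gen h ` D (d h)"
  shows "x + y \<in> gen h ` D (d h)"
proof -
  obtain a b where "a \<in> D (d h)" "b \<in> D (d h)" "x = gen h a" "y = gen h b"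
    using assms by blast
  then show ?thesis
    using D_add[of "d h" a b] h by (simp add: gen_add[OF h, symmetric])
qed

lemma gen_image_uminus:
  assumes h: "h \<in> G" and "x \<in> gen h ` D (d h)"
  shows "- x \<in> gen h ` D (d h)"
proof -
  obtain a where "a \<in> D (d h)" "x = gen h a"
    using assms by blast
  then show ?thesis
    using D_uminus[of "d h" a] h by (simp add: gen_uminus[OF h, symmetric])
qed

lemma embed_at:
  assumes "e \<in> objects G m iv" and "a \<in> D e"
  shows "embed e a e = a"
  using assms object_closed[OF assms(1)] al_object[OF assms] D_mult_one[of e a]
  unfolding embed_def pull_def by simp

lemma gen_object:
  assumes e: "e \<in> objects G m iv"
  shows "gen e a = embed e a"
proof (rule ext)
  fix x
  have "m e x = x" if "x \<in> G" "r x = e"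
    using comp_r_left[of x] that by simp
  then show "gen e a x = embed e a x"
    unfolding gen_def embed_def using e by simp
qed

lemma translate_embed:
  assumes h: "h \<in> G"
  shows "translate h (embed (d h) b) = gen h b"
proof (rule ext)
  fix x
  show "translate h (embed (d h) b) x = gen h b x"
  proof (cases "x \<in> G \<and> le (r x) (r h)")
    case True
    define k where "k = res (r x) h"
    have k: "k \<in> G" "le k h" "r k = r x"
      using res[of h "r x"] True h unfolding k_def by auto
    have y: "m (iv k) x \<in> G" "r (m (iv k) x) = d k"
      using k True by simp_all
    have lhs: "translate h (embed (d h) b) x = embed (d h) b (m (iv k) x)"
      using True unfolding translate_def k_def by simp
    show ?thesis
    proof (cases "r x = r h")
      case True
      then have "k = h"
        using res_eqI[of h h "r x"] h unfolding k_def by simp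
      then show ?thesis
        unfolding lhs embed_def gen_def using y \<open>x \<in> G \<and> le (r x) (r h)\<close> True by simp
    next
      case False
      then have "d k \<noteq> d h"
        using below_eq_if_d_eq[of h k h] k h by auto
      then show ?thesis
        unfolding lhs embed_def gen_def using y False by simp
    qed
  next
    case False
    have not_r: "\<not> (x \<in> G \<and> r x = r h)"
      using False h by auto
    show ?thesis
      unfolding translate_def gen_def if_not_P[OF False] if_not_P[OF not_r] ..
  qed
qed

lemma gen_eq_embed_al:
  assumes g: "g \<in> G" and a: "a \<in> D (iv g)"
  shows "gen g a = embed (r g) (al g a)"
  by (rule ext) (simp add: gen_def embed_def pull_al g a)

lemma pull_transport_in_D:
  assumes "h \<in> G" "h' \<in> G" "r h = r h'"
  shows "pull (m (iv h) h') b \<in> D (d h')"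
  using pull_in[of "m (iv h) h'" b] D_subset_r[of "iv (m (iv h) h')"] assms
  by (auto simp: inv_comp)

lemma gen_mult_gen_disjoint: "r h \<noteq> r h' \<Longrightarrow> gen h b * gen h' b' = 0"
  by (rule ext) (simp add: gen_def)

lemma gen_one_apply:
  assumes "h \<in> G" "x \<in> G" "r x = r h"
  shows "gen h (one (d h)) x = one (iv (m (iv h) x))"
  unfolding gen_def using pull_one_r[of "m (iv h) x"] assms by simp

lemma pull_mult_one_transport:
  assumes h: "h \<in> G" and h': "h' \<in> G" and hh': "r h = r h'" and x: "x \<in> G" "r x = r h"
  shows "pull (m (iv h) x) b * one (iv (m (iv h') x)) = pull (m (iv h') x) (pull (m (iv h) h') b)"
proof -
  define y y' k where "y = m (iv h) x" and "y' = m (iv h') x" and "k = m (iv h') h"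
  have y: "y \<in> G" "r y = d h" and y': "y' \<in> G" "r y' = d h'"
    using x h h' hh' unfolding y_def y'_def by simp_all
  have k: "k \<in> G" "r k = d h'" "d k = r y"
    using h h' hh' y unfolding k_def by simp_all
  have "m k y = m (iv h') (m h (m (iv h) x))"
    using comp_assoc[of "iv h'" h y] h h' hh' y unfolding k_def y_def by simp
  then have ky: "m k y = y'"
    using comp_inv_cancel[of h x] h x unfolding y'_def by simp
  have ivk: "iv k = m (iv h) h'"
    using inv_comp[of "iv h'" h] h h' hh' unfolding k_def by simp
  have "m (iv k) y' = m (iv h) (m h' (m (iv h') x))"
    using comp_assoc[of "iv h" h' y'] h h' hh' y' unfolding ivk y'_def by simp
  then have iky: "m (iv k) y' = y"
    using comp_inv_cancel[of h' x] h' hh' x unfolding y_def by simp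
  have "pull y b * one (iv y') = pull y (b * one (iv k))"
    using pull_mult_one_inv[OF y(1) k(1,3), of b] ky by simp
  also have "\<dots> = pull y' (pull (iv k) b)"
    using pull_al[of y' k "b * one (iv k)"] y' k iky D_mult_left
    unfolding pull_def[of "iv k"] by simp
  finally show ?thesis
    unfolding y_def y'_def ivk .
qed

text \<open>The values of \<open>gen h' (one (d h'))\<close> are central idempotents, so it commutes with everything;
  multiplying by it moves a generator at \<open>h\<close> to one at \<open>h'\<close>.\<close>
lemma gen_mult_gen_one:
  assumes h: "h \<in> G" and h': "h' \<in> G" and hh': "r h = r h'"
  shows "gen h b * gen h' (one (d h')) = gen h' (pull (m (iv h) h') b)"
    and "gen h' (one (d h')) * gen h b = gen h' (pull (m (iv h) h') b)"
proof -
  have pointwise: "gen h b x * gen h' (one (d h')) x = gen h' (pull (m (iv h) h') b) x" for x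
  proof (cases "x \<in> G \<and> r x = r h")
    case True
    then have "gen h b x * gen h' (one (d h')) x = pull (m (iv h) x) b * one (iv (m (iv h') x))"
      using gen_one_apply[OF h', of x] hh' unfolding gen_def[of h] by simp
    also have "\<dots> = gen h' (pull (m (iv h) h') b) x"
      using pull_mult_one_transport[OF h h' hh'] True hh' unfolding gen_def by simp
    finally show ?thesis .
  next
    case False
    moreover have "\<not> (x \<in> G \<and> r x = r h')"
      using False hh' by simp
    ultimately show ?thesis
      unfolding gen_def by (simp only: if_False mult_zero_left)
  qed
  have commute: "gen h' (one (d h')) x * gen h b x = gen h b x * gen h' (one (d h')) x" for x
  proof (cases "x \<in> G \<and> r x = r h'")
    case True
    then have "gen h' (one (d h')) x = one (iv (m (iv h') x))"
      using gen_one_apply[of h' x] h' by simp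
    then show ?thesis
      using one_central[of "iv (m (iv h') x)" "gen h b x"] True h' by simp
  next
    case False
    then have "gen h' (one (d h')) x = 0"
      unfolding gen_def by (simp only: if_False)
    then show ?thesis
      by simp
  qed
  show "gen h b * gen h' (one (d h')) = gen h' (pull (m (iv h) h') b)"
    and "gen h' (one (d h')) * gen h b = gen h' (pull (m (iv h) h') b)"
    using pointwise commute by (simp_all add: fun_eq_iff)
qed

lemma gen_mult_gen:
  assumes h: "h \<in> G" and h': "h' \<in> G" and hh': "r h = r h'" and b': "b' \<in> D (d h')"
  shows "gen h b * gen h' b' = gen h' (pull (m (iv h) h') b * b')"
    and "gen h' b' * gen h b = gen h' (b' * pull (m (iv h) h') b)"
proof -
  let ?u = "gen h' (one (d h'))" and ?c = "pull (m (iv h) h') b"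
  have u: "?u * gen h' b' = gen h' b'" "gen h' b' * ?u = gen h' b'"
    using D_one_mult[of "d h'" b'] D_mult_one[of "d h'" b'] b' h'
    by (simp_all add: gen_mult[OF h', symmetric])
  have "gen h b * gen h' b' = (gen h b * ?u) * gen h' b'"
    by (simp only: u(1) mult.assoc)
  also have "\<dots> = gen h' (?c * b')"
    by (simp only: gen_mult_gen_one(1)[OF h h' hh'] gen_mult[OF h'])
  finally show "gen h b * gen h' b' = gen h' (?c * b')" .
  have "gen h' b' * gen h b = gen h' b' * (?u * gen h b)"
    by (simp only: u(2) mult.assoc[symmetric])
  also have "\<dots> = gen h' (b' * ?c)"
    by (simp only: gen_mult_gen_one(2)[OF h h' hh'] gen_mult[OF h'])
  finally show "gen h' b' * gen h b = gen h' (b' * ?c)" .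
qed

definition glob_ideal :: "'g \<Rightarrow> ('g \<Rightarrow> 'a) set" where
  "glob_ideal g = set_sum {h \<in> G. le (r h) (r g)} (\<lambda>h. translate h ` embed (d h) ` D (d h))"

definition glob_ring :: "('g \<Rightarrow> 'a) set" where
  "glob_ring = set_sum (objects G m iv) glob_ideal"

lemma glob_ideal_eq: "glob_ideal g = set_sum {h \<in> G. le (r h) (r g)} (\<lambda>h. gen h ` D (d h))"
  unfolding glob_ideal_def image_image by (rule set_sum_cong) (simp add: translate_embed)

lemma glob_ideal_induct:
  assumes "f \<in> glob_ideal g" and "P 0" and "\<And>a b. P a \<Longrightarrow> P b \<Longrightarrow> P (a + b)"
    and "\<And>h b. h \<in> G \<Longrightarrow> le (r h) (r g) \<Longrightarrow> b \<in> D (d h) \<Longrightarrow> P (gen h b)"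
  shows "P f"
  using assms(1) unfolding glob_ideal_eq
proof (rule set_sum_induct)
  fix h y assume "h \<in> {h \<in> G. le (r h) (r g)}" "y \<in> gen h ` D (d h)"
  then show "P y"
    using assms(4) by blast
qed (use assms(2,3) in blast)+

lemma gen_in_glob_ideal: "h \<in> G \<Longrightarrow> le (r h) (r g) \<Longrightarrow> b \<in> D (d h) \<Longrightarrow> gen h b \<in> glob_ideal g"
  unfolding glob_ideal_eq by (rule set_sum_memI) auto

lemma glob_ideal_zero: "0 \<in> glob_ideal g"
  unfolding glob_ideal_def by (rule zero_in_set_sum)

lemma glob_ideal_add: "f \<in> glob_ideal g \<Longrightarrow> f' \<in> glob_ideal g \<Longrightarrow> f + f' \<in> glob_ideal g"
  unfolding glob_ideal_eq
  by (rule add_in_set_sum) (auto simp: D_add gen_add[symmetric] intro!: imageI)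

lemma glob_ideal_uminus: "f \<in> glob_ideal g \<Longrightarrow> - f \<in> glob_ideal g"
  unfolding glob_ideal_eq
  by (rule uminus_in_set_sum) (auto simp: D_uminus gen_uminus[symmetric] intro!: imageI)

lemma glob_ideal_cong_r: "r g = r g' \<Longrightarrow> glob_ideal g = glob_ideal g'"
  unfolding glob_ideal_def by simp

lemma gen_supported_below: "h \<in> G \<Longrightarrow> supported_below (gen h b) (r h)"
  unfolding supported_below_def gen_def by (auto split: if_splits)

lemma embed_supported_below: "e \<in> objects G m iv \<Longrightarrow> supported_below (embed e a) e"
  unfolding supported_below_def embed_def by (auto split: if_splits)

lemma glob_ideal_supported_below:
  assumes g: "g \<in> G" and f: "f \<in> glob_ideal g"
  shows "supported_below f (r g)"
  using f
proof (rule glob_ideal_induct)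
  show "supported_below 0 (r g)"
    by (rule supported_below_zero)
  show "supported_below (a + b) (r g)" if "supported_below a (r g)" "supported_below b (r g)"
    for a b :: "'g \<Rightarrow> 'a"
    using that by (rule supported_below_add)
  show "supported_below (gen h b) (r g)" if "h \<in> G" "le (r h) (r g)" for h b
    using supported_below_mono[OF gen_supported_below] g that by simp
qed

lemma gen_mult_glob_ideal:
  assumes h: "h \<in> G" and f: "f \<in> glob_ideal g"
  shows "f * gen h b \<in> glob_ideal g \<and> gen h b * f \<in> glob_ideal g"
  using f[unfolded glob_ideal_eq]
proof (rule set_sum_mult_mem[OF _ glob_ideal_zero glob_ideal_add])
  fix h' y assume "h' \<in> {h \<in> G. le (r h) (r g)}" "y \<in> gen h' ` D (d h')"
  then obtain b' where h': "h' \<in> G" "le (r h') (r g)" and b': "b' \<in> D (d h')" "y = gen h' b'"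
    by blast
  show "y * gen h b \<in> glob_ideal g \<and> gen h b * y \<in> glob_ideal g"
  proof (cases "r h = r h'")
    case True
    have "pull (m (iv h) h') b \<in> D (d h')"
      using pull_transport_in_D h h' True by blast
    then show ?thesis
      using gen_mult_gen[OF h h'(1) True b'(1)] h' b' gen_in_glob_ideal D_mult_left D_mult_right
      by simp
  next
    case False
    then show ?thesis
      using gen_mult_gen_disjoint[of h h'] gen_mult_gen_disjoint[of h' h] glob_ideal_zero b'(2)
      by metis
  qed
qed

lemma glob_ideal_mult:
  assumes x: "x \<in> glob_ideal g'" and f: "f \<in> glob_ideal g"
  shows "x * f \<in> glob_ideal g \<and> f * x \<in> glob_ideal g"
  using x[unfolded glob_ideal_eq]
proof (rule set_sum_mult_mem[OF _ glob_ideal_zero glob_ideal_add])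
  fix h y assume "h \<in> {h \<in> G. le (r h) (r g')}" "y \<in> gen h ` D (d h)"
  then obtain b where "h \<in> G" "y = gen h b"
    by blast
  then show "y * f \<in> glob_ideal g \<and> f * y \<in> glob_ideal g"
    using gen_mult_glob_ideal[of h f g b] f by simp
qed

lemma glob_ideal_subset_ring: "e \<in> objects G m iv \<Longrightarrow> glob_ideal e \<subseteq> glob_ring"
  unfolding glob_ring_def using set_sum_memI[of e "objects G m iv" _ glob_ideal] by blast

lemma glob_ring_add: "x \<in> glob_ring \<Longrightarrow> y \<in> glob_ring \<Longrightarrow> x + y \<in> glob_ring"
  unfolding glob_ring_def by (rule add_in_set_sum) (auto simp: glob_ideal_add)

lemma glob_ring_mult:
  assumes x: "x \<in> glob_ring" and f: "f \<in> glob_ideal g"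
  shows "x * f \<in> glob_ideal g \<and> f * x \<in> glob_ideal g"
  using x[unfolded glob_ring_def]
proof (rule set_sum_mult_mem[OF _ glob_ideal_zero glob_ideal_add])
  fix e y assume "y \<in> glob_ideal e"
  then show "y * f \<in> glob_ideal g \<and> f * y \<in> glob_ideal g"
    using glob_ideal_mult f by blast
qed

lemma glob_ring_subring: "is_subring glob_ring"
  unfolding is_subring_def
proof (intro conjI ballI)
  show zero: "0 \<in> glob_ring"
    unfolding glob_ring_def by (rule zero_in_set_sum)
  fix x y assume x: "x \<in> glob_ring" and y: "y \<in> glob_ring"
  show "x + y \<in> glob_ring"
    using glob_ring_add x y .
  have "y * x \<in> glob_ring \<and> x * y \<in> glob_ring"
    using y[unfolded glob_ring_def]
  proof (rule set_sum_mult_mem[OF _ zero glob_ring_add])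
    fix e z assume "e \<in> objects G m iv" "z \<in> glob_ideal e"
    then show "z * x \<in> glob_ring \<and> x * z \<in> glob_ring"
      using glob_ring_mult[OF x, of z e] glob_ideal_subset_ring[of e] by blast
  qed
  then show "x * y \<in> glob_ring" ..
next
  fix x assume "x \<in> glob_ring"
  then show "- x \<in> glob_ring"
    unfolding glob_ring_def by (rule uminus_in_set_sum[rotated]) (simp add: glob_ideal_uminus)
qed

lemma glob_ideal_ideal_ring: "e \<in> objects G m iv \<Longrightarrow> is_ideal (glob_ideal e) glob_ring"
  unfolding is_ideal_def
  using glob_ideal_subset_ring glob_ideal_zero glob_ideal_add glob_ideal_uminus glob_ring_mult
  by blast

lemma glob_ideal_ideal_r: "g \<in> G \<Longrightarrow> is_ideal (glob_ideal g) (glob_ideal (r g))"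
  unfolding is_ideal_def
  using glob_ideal_cong_r[of g "r g"] glob_ideal_zero glob_ideal_add glob_ideal_uminus glob_ideal_mult
  by simp

lemma translate_gen:
  assumes g: "g \<in> G" and h: "h \<in> G" and hg: "le (r h) (d g)"
  obtains h' where "h' \<in> G" "le (r h') (r g)" "d h' = d h" "translate g (gen h b) = gen h' b"
proof -
  obtain k where k: "k \<in> G" "le k g" "d k = r h"
    using ex1_implies_ex[OF restriction_d[of g "r h"]] g h hg by auto
  have "supported_below (gen h b) (d k)"
    using gen_supported_below[OF h] k(3) by simp
  then have "translate g (gen h b) = translate k (gen h b)"
    by (rule translate_le[OF k(1) g k(2), symmetric])
  also have "\<dots> = translate k (translate h (embed (d h) b))"
    by (simp add: translate_embed h)
  also have "\<dots> = translate (m k h) (embed (d h) b)"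
    by (rule translate_comp[OF k(1) h k(3)]) (rule embed_supported_below, simp add: h)
  also have "\<dots> = gen (m k h) b"
    using translate_embed[of "m k h" b] k h by simp
  finally show ?thesis
    using that[of "m k h"] k h le_r[OF k(1) g k(2)] by simp
qed

lemma translate_in_glob_ideal:
  assumes g: "g \<in> G" and f: "f \<in> glob_ideal (iv g)"
  shows "translate g f \<in> glob_ideal g"
  using f
proof (rule glob_ideal_induct)
  show "translate g 0 \<in> glob_ideal g"
    unfolding translate_zero by (rule glob_ideal_zero)
  show "translate g (a + c) \<in> glob_ideal g"
    if "translate g a \<in> glob_ideal g" "translate g c \<in> glob_ideal g" for a c :: "'g \<Rightarrow> 'a"
    using that by (simp add: translate_add glob_ideal_add)
  fix h b assume h: "h \<in> G" "le (r h) (r (iv g))" and b: "b \<in> D (d h)"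
  obtain h' where "h' \<in> G" "le (r h') (r g)" "d h' = d h" "translate g (gen h b) = gen h' b"
    using translate_gen[OF g h(1)] h g by auto
  then show "translate g (gen h b) \<in> glob_ideal g"
    using gen_in_glob_ideal b by simp
qed

lemma translate_inv:
  assumes g: "g \<in> G" and f: "f \<in> glob_ideal (iv g)"
  shows "translate (iv g) (translate g f) = f"
proof -
  have supp: "supported_below f (d g)"
    using glob_ideal_supported_below[of "iv g" f] g f by simp
  then have "translate (iv g) (translate g f) = translate (d g) f"
    using translate_comp[of "iv g" g f] g by (simp add: comp_inv_left)
  also have "\<dots> = f"
    using translate_object[OF d_in_objects[OF g] supp] .
  finally show ?thesis .
qed

lemma translate_iso: "g \<in> G \<Longrightarrow> ring_iso (translate g) (glob_ideal (iv g)) (glob_ideal g)"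
  unfolding ring_iso_def ring_hom_on_def
proof (intro conjI ballI)
  assume g: "g \<in> G"
  show "bij_betw (translate g) (glob_ideal (iv g)) (glob_ideal g)"
  proof (rule bij_betw_byWitness[where f' = "translate (iv g)"])
    show "\<forall>f\<in>glob_ideal (iv g). translate (iv g) (translate g f) = f"
      using translate_inv g by blast
    show "\<forall>f\<in>glob_ideal g. translate g (translate (iv g) f) = f"
      using translate_inv[of "iv g"] g by simp
    show "translate g ` glob_ideal (iv g) \<subseteq> glob_ideal g"
      using translate_in_glob_ideal g by blast
    show "translate (iv g) ` glob_ideal g \<subseteq> glob_ideal (iv g)"
      using translate_in_glob_ideal[of "iv g"] g by auto
  qed
qed (simp_all add: translate_add translate_mult)

lemma translate_object_glob_ideal:
  assumes e: "e \<in> objects G m iv" and f: "f \<in> glob_ideal e"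
  shows "translate e f = f"
proof -
  have "supported_below f e"
    using glob_ideal_supported_below[OF object_closed[OF e] f] e by simp
  then show ?thesis
    by (rule translate_object[OF e])
qed

lemma translate_comp_glob_ideal:
  assumes gh: "g \<in> G" "h \<in> G" "d g = r h" and f: "f \<in> glob_ideal (iv h)"
  shows "translate g (translate h f) = translate (m g h) f"
proof -
  have "supported_below f (d h)"
    using glob_ideal_supported_below[of "iv h" f] gh f by simp
  then show ?thesis
    by (rule translate_comp[OF gh])
qed

lemma translate_le_glob_ideal:
  assumes gh: "g \<in> G" "h \<in> G" "le g h" and f: "f \<in> glob_ideal (iv g)"
  shows "translate g f = translate h f"
proof -
  have "supported_below f (d g)"
    using glob_ideal_supported_below[of "iv g" f] gh f by simp
  then show ?thesis
    by (rule translate_le[OF gh])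
qed

lemma glob_ideal_mono:
  assumes gh: "g \<in> G" "h \<in> G" "le g h"
  shows "glob_ideal g \<subseteq> glob_ideal h"
  unfolding glob_ideal_def
proof (rule set_sum_mono, rule subsetI)
  fix x assume "x \<in> {x \<in> G. le (r x) (r g)}"
  then show "x \<in> {x \<in> G. le (r x) (r h)}"
    using le_trans[of "r x" "r g" "r h"] le_r[OF gh] gh by simp
qed

lemma ordered_global_action: "ordered_global_action G m iv le glob_ring glob_ideal translate"
  unfolding ordered_global_action_def po_action_def partial_action_def po_cond_def
proof (intro conjI ballI impI allI)
  show "is_subring glob_ring"
    by (rule glob_ring_subring)
  show "glob_ring = set_sum (objects G m iv) glob_ideal"
    by (rule glob_ring_def)
  show "is_ideal (glob_ideal e) glob_ring" if "e \<in> objects G m iv" for e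
    using glob_ideal_ideal_ring that .
  show "translate e f = f" if "e \<in> objects G m iv" "f \<in> glob_ideal e" for e f
    using translate_object_glob_ideal that .
  show "is_ideal (glob_ideal g) (glob_ideal (r g))" if "g \<in> G" for g
    using glob_ideal_ideal_r that .
  show "ring_iso (translate g) (glob_ideal (iv g)) (glob_ideal g)" if "g \<in> G" for g
    using translate_iso that .
  show "glob_ideal g = glob_ideal (r g)" if "g \<in> G" for g
    by (rule glob_ideal_cong_r) (use that in simp)
  show "glob_ideal g \<subseteq> glob_ideal h" if "g \<in> G" "h \<in> G" "le g h" for g h
    using glob_ideal_mono that .
  show "translate g f = translate h f"
    if "g \<in> G" "h \<in> G" "le g h" "f \<in> glob_ideal (iv g)" for g h f
    using translate_le_glob_ideal that .
  show "{f \<in> glob_ideal (iv h). translate h f \<in> glob_ideal (iv g) \<inter> glob_ideal h}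
      \<subseteq> glob_ideal (iv (m g h))" if "g \<in> G" "h \<in> G" "d g = r h" for g h
  proof -
    have "glob_ideal (iv (m g h)) = glob_ideal (iv h)"
      by (rule glob_ideal_cong_r) (use that in simp)
    then show ?thesis
      by blast
  qed
  show "translate g (translate h f) = translate (m g h) f"
    if "g \<in> G" "h \<in> G" "d g = r h"
      and "f \<in> {f \<in> glob_ideal (iv h). translate h f \<in> glob_ideal (iv g) \<inter> glob_ideal h}"
    for g h f
    using translate_comp_glob_ideal that by blast
qed

lemma gen_mult_gen_object:
  assumes e: "e \<in> objects G m iv" and h: "h \<in> G" "le (r h) e" and a: "a \<in> D e"
  shows "gen h b * gen e a \<in> gen e ` D e \<and> gen e a * gen h b \<in> gen e ` D e"
proof (cases "r h = r e")
  case True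
  have eG: "e \<in> G" "d e = e"
    using e object_closed by simp_all
  have "pull (m (iv h) e) b \<in> D e"
    using pull_transport_in_D[OF h(1) eG(1) True] eG by simp
  then have "pull (m (iv h) e) b * a \<in> D e" "a * pull (m (iv h) e) b \<in> D e"
    using D_mult_left[OF eG(1)] D_mult_right[OF eG(1)] a by blast+
  moreover have "a \<in> D (d e)"
    using a eG by simp
  ultimately show ?thesis
    using gen_mult_gen[OF h(1) eG(1) True] by simp
next
  case False
  then have "gen h b * gen e a = 0" "gen e a * gen h b = 0"
    using gen_mult_gen_disjoint by metis+
  then show ?thesis
    using gen_image_zero[of e] e object_closed by simp
qed

lemma gen_image_ideal:
  assumes e: "e \<in> objects G m iv"
  shows "is_ideal (gen e ` D e) (glob_ideal e)"
proof -
  have eG: "e \<in> G" "d e = e" "r e = e"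
    using e object_closed by simp_all
  have absorb: "f * x \<in> gen e ` D e \<and> x * f \<in> gen e ` D e"
    if f: "f \<in> glob_ideal e" and x: "x \<in> gen e ` D e" for f x
    using f[unfolded glob_ideal_eq]
  proof (rule set_sum_mult_mem)
    show "0 \<in> gen e ` D e" "\<And>a b. a \<in> gen e ` D e \<Longrightarrow> b \<in> gen e ` D e \<Longrightarrow> a + b \<in> gen e ` D e"
      using gen_image_zero[OF eG(1)] gen_image_add[OF eG(1)] eG(2) by simp_all
    fix h y assume "h \<in> {h \<in> G. le (r h) (r e)}" "y \<in> gen h ` D (d h)"
    then show "y * x \<in> gen e ` D e \<and> x * y \<in> gen e ` D e"
      using gen_mult_gen_object[OF e] x eG by auto
  qed
  show ?thesis
    unfolding is_ideal_def
    using gen_in_glob_ideal[of e e] gen_image_zero[OF eG(1)] gen_image_add[OF eG(1)]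
      gen_image_uminus[OF eG(1)] absorb eG
    by auto
qed

lemma embed_image_D:
  assumes g: "g \<in> G"
  shows "embed (r g) ` D g = embed (r g) ` D (r g) \<inter> translate g ` embed (d g) ` D (d g)"
proof (intro subset_antisym subsetI)
  fix z assume "z \<in> embed (r g) ` D g"
  then obtain c where c: "c \<in> D g" "z = embed (r g) c"
    by blast
  define a where "a = al (iv g) c"
  have a: "a \<in> D (iv g)" "al g a = c"
    using al_in[of "iv g" c] al_inv[of "iv g" c] g c unfolding a_def by simp_all
  then have "z = translate g (embed (d g) a)"
    using c translate_embed[OF g] gen_eq_embed_al[OF g] by simp
  moreover have "a \<in> D (d g)" "c \<in> D (r g)"
    using D_subset_r[of "iv g"] D_subset_r[of g] g a c by auto
  ultimately show "z \<in> embed (r g) ` D (r g) \<inter> translate g ` embed (d g) ` D (d g)"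
    using c by blast
next
  fix z assume "z \<in> embed (r g) ` D (r g) \<inter> translate g ` embed (d g) ` D (d g)"
  then obtain c b where c: "c \<in> D (r g)" "z = embed (r g) c"
    and b: "b \<in> D (d g)" "z = gen g b"
    using translate_embed[OF g] by auto
  have "c = z (r g)"
    using embed_at[of "r g" c] c g by simp
  also have "\<dots> = pull (iv g) b"
    using b(2) g comp_d_right[of "iv g"] unfolding gen_def by simp
  finally have "c \<in> D g"
    using pull_in[of "iv g" b] g by simp
  then show "z \<in> embed (r g) ` D g"
    using c by blast
qed

theorem glob_globalization: "globalization G m iv le D al glob_ring glob_ideal translate embed"
  unfolding globalization_def
proof (intro conjI ballI)
  show "ordered_global_action G m iv le glob_ring glob_ideal translate"
    by (rule ordered_global_action)
next
  fix e assume e: "e \<in> objects G m iv"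
  have "embed e ` D e = gen e ` D e"
    using gen_object[OF e] by simp
  then have ideal: "is_ideal (embed e ` D e) (glob_ideal e)"
    using gen_image_ideal[OF e] by simp
  show "inj_on (embed e) (D e)"
    by (rule inj_onI) (metis embed_at e)
  show "ring_hom_on (embed e) (D e)"
    unfolding ring_hom_on_def by (simp add: embed_add embed_mult)
  show "embed e ` D e \<subseteq> glob_ideal e"
    using is_idealD(1)[OF ideal] .
  show "is_ideal (embed e ` D e) (glob_ideal e)"
    by (rule ideal)
next
  fix g assume g: "g \<in> G"
  show "embed (r g) ` D g = embed (r g) ` D (r g) \<inter> translate g ` embed (d g) ` D (d g)"
    by (rule embed_image_D[OF g])
  fix a assume "a \<in> D (iv g)"
  then show "translate g (embed (d g) a) = embed (r g) (al g a)"
    using translate_embed[OF g] gen_eq_embed_al[OF g] by simp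
next
  fix g
  show "glob_ideal g = set_sum {h \<in> G. le (r h) (r g)} (\<lambda>h. translate h ` embed (d h) ` D (d h))"
    by (rule glob_ideal_def)
qed

end

theorem mainTheorem1:
  fixes G :: "'g set" and m :: "'g \<Rightarrow> 'g \<Rightarrow> 'g" and iv :: "'g \<Rightarrow> 'g"
    and le :: "'g \<Rightarrow> 'g \<Rightarrow> bool"
    and D :: "'g \<Rightarrow> 'a::ring set" and al :: "'g \<Rightarrow> 'a \<Rightarrow> 'a"
  assumes "ordered_groupoid G m iv le"
    and "po_action G m iv le (UNIV :: 'a set) D al"
    and "preunital G m iv (UNIV :: 'a set) D"
  shows "((\<exists>(S :: 'b::ring set) E be ph. globalization G m iv le D al S E be ph)
            \<longrightarrow> unital G (UNIV :: 'a set) D)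
       \<and> (unital G (UNIV :: 'a set) D
            \<longrightarrow> (\<exists>(S :: ('g \<Rightarrow> 'a) set) E be ph. globalization G m iv le D al S E be ph))"
proof -
  interpret ordered_gpd G m iv le
    by (rule ordered_gpd.intro) (rule assms(1))
  have action: "partial_action G m iv UNIV D al"
    using assms(2) unfolding po_action_def by blast
  have "unital G UNIV D" if "globalization G m iv le D al S E be ph"
    for S :: "'b set" and E be ph
    using unital_if_globalization[OF action assms(3) that] .
  moreover have "globalization G m iv le D al
      (unital_partial_action.glob_ring G m iv le D al)
      (unital_partial_action.glob_ideal G m iv le D al)
      (ordered_gpd.translate G m iv le) (unital_partial_action.embed G m iv D al)"
    if "unital G UNIV D"
    by (rule unital_partial_action.glob_globalization)
      (unfold_locales, fact assms(1), fact action, fact that)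
  ultimately show ?thesis
    by blast
qed

end
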